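(* Let $\mu,\sigma,\rho>0$, $\Delta>0$, and suppose $K\ge \mu/\rho-u_0$. Define $V(x)=V_0(x)$ for $0\le x\le u_0$ and $V(x)=x-u_0+\mu/\rho$ for $x>u_0$. Then $V$ is a $C^2$ function on $[0,\infty)$ and satisfies, for $x>0$: (a) $V(0)=0$; (b) $V(x)\ge MV(x)$; (c) $(A-\rho)V(x)\le0$; (d) $V'(x)\ge1$; (e) $[V(x)-MV(x)][(A-\rho)V(x)][V'(x)-1]=0$.
   Context: $A=\frac12\sigma^2\frac{d^2}{dx^2}+\mu\frac{d}{dx}$ is the generator of $X(t)=X(0)+\mu t+\sigma W(t)$, $W$ standard Brownian motion. Let $r_1=(-\mu+\sqrt{\mu^2+2\sigma^2\rho})/\sigma^2$, $r_2=(\mu+\sqrt{\mu^2+2\sigma^2\rho})/\sigma^2$, $u_0=\frac{1}{r_1+r_2}\ln\frac{\rho+\mu r_2}{\rho-\mu r_1}$, and let $V_0:\mathbf{R}\to\mathbf{R}$ be the solution of $(A-\rho)V_0=0$ with $V_0(u_0)=\mu/\rho$, $V_0'(u_0)=1$ (for this $u_0$ one has $V_0(0)=0$). $K\ge 0$ is the fixed cost of capital issuance. For $f$ on $[0,\infty)$, $Mf(x)=E\big[e^{-\rho\Delta}\sup_{s\in\mathbf{R}}[f(X(\Delta)+s)-s-K]I_{\tau>\Delta}\,|\,X(0)=x\big]$, $x>0$, with $\tau$ the first hitting time of $0$. *)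

theory Defs
  imports "HOL-Probability.Probability"
begin

definition std_BM :: "'a measure \<Rightarrow> (real \<Rightarrow> 'a \<Rightarrow> real) \<Rightarrow> bool" where
  "std_BM P W \<longleftrightarrow>
     prob_space P \<and>
     (\<forall>t. W t \<in> borel_measurable P) \<and>
     (\<forall>\<omega>\<in>space P. W 0 \<omega> = 0 \<and> continuous_on {0..} (\<lambda>t. W t \<omega>)) \<and>
     (\<forall>s t. 0 \<le> s \<and> s < t \<longrightarrow>
        distributed P lborel (\<lambda>\<omega>. W t \<omega> - W s \<omega>)
          (\<lambda>y. ennreal (normal_density 0 (sqrt (t - s)) y))) \<and>
     (\<forall>(ts :: nat \<Rightarrow> real) n. (ts 0 \<ge> 0 \<and> (\<forall>i<n. ts i < ts (Suc i))) \<longrightarrow>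
        prob_space.indep_vars P (\<lambda>_. borel) (\<lambda>i \<omega>. W (ts (Suc i)) \<omega> - W (ts i) \<omega>) {..<n})"

definition Xproc :: "real \<Rightarrow> real \<Rightarrow> (real \<Rightarrow> 'a \<Rightarrow> real) \<Rightarrow> real \<Rightarrow> real \<Rightarrow> 'a \<Rightarrow> real" where
  "Xproc \<mu> \<sigma> W x t \<omega> = x + \<mu> * t + \<sigma> * W t \<omega>"

text \<open>First hitting time of 0 (value \<infinity> if 0 is never hit).\<close>
definition hit0 :: "real \<Rightarrow> real \<Rightarrow> (real \<Rightarrow> 'a \<Rightarrow> real) \<Rightarrow> real \<Rightarrow> 'a \<Rightarrow> ereal" where
  "hit0 \<mu> \<sigma> W x \<omega> = Inf (ereal ` {t. t \<ge> 0 \<and> Xproc \<mu> \<sigma> W x t \<omega> = 0})"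

definition Mop :: "'a measure \<Rightarrow> (real \<Rightarrow> 'a \<Rightarrow> real) \<Rightarrow> real \<Rightarrow> real \<Rightarrow> real \<Rightarrow> real \<Rightarrow> real
                   \<Rightarrow> (real \<Rightarrow> real) \<Rightarrow> real \<Rightarrow> real" where
  "Mop P W \<mu> \<sigma> \<rho> \<Delta> K f x =
     (\<integral>\<omega>. exp (- \<rho> * \<Delta>) *
            Sup {f (Xproc \<mu> \<sigma> W x \<Delta> \<omega> + s) - s - K | s. Xproc \<mu> \<sigma> W x \<Delta> \<omega> + s \<ge> 0} *
            indicator {\<omega>\<in>space P. hit0 \<mu> \<sigma> W x \<omega> > ereal \<Delta>} \<omega> \<partial>P)"

definition r1 :: "real \<Rightarrow> real \<Rightarrow> real \<Rightarrow> real" where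
  "r1 \<mu> \<sigma> \<rho> = (- \<mu> + sqrt (\<mu>\<^sup>2 + 2 * \<sigma>\<^sup>2 * \<rho>)) / \<sigma>\<^sup>2"

definition r2 :: "real \<Rightarrow> real \<Rightarrow> real \<Rightarrow> real" where
  "r2 \<mu> \<sigma> \<rho> = (\<mu> + sqrt (\<mu>\<^sup>2 + 2 * \<sigma>\<^sup>2 * \<rho>)) / \<sigma>\<^sup>2"

definition u0 :: "real \<Rightarrow> real \<Rightarrow> real \<Rightarrow> real" where
  "u0 \<mu> \<sigma> \<rho> = 1 / (r1 \<mu> \<sigma> \<rho> + r2 \<mu> \<sigma> \<rho>) *
      ln ((\<rho> + \<mu> * r2 \<mu> \<sigma> \<rho>) / (\<rho> - \<mu> * r1 \<mu> \<sigma> \<rho>))"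

definition C2_on_with :: "real set \<Rightarrow> (real \<Rightarrow> real) \<Rightarrow> (real \<Rightarrow> real) \<Rightarrow> (real \<Rightarrow> real) \<Rightarrow> bool" where
  "C2_on_with S f f1 f2 \<longleftrightarrow>
     (\<forall>x\<in>S. (f has_real_derivative f1 x) (at x within S) \<and>
            (f1 has_real_derivative f2 x) (at x within S)) \<and> continuous_on S f2"

end

theory Submission
  imports Defs
begin

text \<open>The ODE \<open>(A - \<rho>) V0 = 0\<close> with the data at \<open>u0\<close> has the unique solution
  \<open>F y = \<kappa> (exp (r1 y) - exp (- r2 y))\<close>, where \<open>r1\<close> and \<open>- r2\<close> are the roots of
  \<open>\<sigma>\<^sup>2 r\<^sup>2 / 2 + \<mu> r - \<rho>\<close>; the choice of \<open>u0\<close> makes \<open>F(u0) = \<mu>/\<rho>\<close>, \<open>F'(u0) = 1\<close> and \<open>F''(u0) = 0\<close>.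
  Hence \<open>V\<close> is \<open>C\<^sup>2\<close>, \<open>F''\<close> is increasing so \<open>V' \<ge> 1\<close>, \<open>(A - \<rho>) V\<close> vanishes below \<open>u0\<close> and equals
  \<open>-\<rho> (x - u0)\<close> above it, and \<open>V = min F L\<close> for the linear part \<open>L\<close>.

  For \<open>V \<ge> M V\<close>: \<open>V(y) - y\<close> increases to \<open>\<mu>/\<rho> - u0 \<le> K\<close>, so the supremum in \<open>M\<close> is at most
  \<open>X(\<Delta>) \<le> V(X(\<Delta>))\<close> and \<open>M V(x) \<le> E[exp (- \<rho> \<Delta>) V(X(\<Delta>)); \<tau> > \<Delta>]\<close>. This is bounded through the skeleton
  of \<open>X\<close> on the grid of mesh \<open>h = \<Delta>/n\<close>, killed at the first grid point \<open>\<le> 0\<close> (which is killed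
  no earlier than \<open>X\<close>). One Gaussian step satisfies \<open>E[exp (- \<rho> h) V(y + \<mu> h + \<sigma> \<surd>h Z)] \<le> V(y)\<close>,
  with equality for \<open>F\<close> because \<open>r1\<close> and \<open>-r2\<close> are characteristic roots; killing adds at
  most the overshoot \<open>-V\<close> below \<open>0\<close>. Summed over the \<open>n\<close> steps this overshoot is at most
  \<open>loss a + n C h\<^sup>2/a\<^sup>4\<close>, which tends to \<open>0\<close> as \<open>n \<rightarrow> \<infinity>\<close> and then \<open>a \<rightarrow> 0\<close>.\<close>

lemma has_real_derivative_paste:
  fixes f g f' g' :: "real \<Rightarrow> real"
  assumes df: "\<And>x. (f has_real_derivative f' x) (at x)"
    and dg: "\<And>x. (g has_real_derivative g' x) (at x)"
    and "f c = g c" and "f' c = g' c"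
  shows "((\<lambda>x. if x \<le> c then f x else g x) has_real_derivative (if x \<le> c then f' x else g' x)) (at x)"
proof -
  have boundary: "closure {..c} \<inter> closure {c<..} = {c}" by auto
  have "((\<lambda>x. if x \<in> {..c} then f x else g x) has_derivative
      (if x \<in> {..c} then (*) (f' x) else (*) (g' x))) (at x within ({..c} \<union> {c<..}))"
  proof (rule has_derivative_If_within_closures)
    show "(f has_derivative (*) (f' x)) (at x within {..c} \<union> (closure {..c} \<inter> closure {c<..}))"
      using df[of x] by (simp add: has_field_derivative_def has_derivative_at_withinI)
    show "(g has_derivative (*) (g' x)) (at x within {c<..} \<union> (closure {..c} \<inter> closure {c<..}))"
      using dg[of x] by (simp add: has_field_derivative_def has_derivative_at_withinI)
  qed (use assms boundary in auto)
  moreover have "{..c} \<union> {c<..} = (UNIV :: real set)" by auto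
  ultimately show ?thesis
    by (simp add: has_field_derivative_def if_distrib[of "(*)"] cong: if_cong)
qed

text \<open>The operator factors as \<open>(D - p)(D - q)\<close>, so
  \<open>f' - q f\<close> solves a first-order equation with zero initial value.\<close>
lemma linear_ode_zero_initial_unique:
  fixes f f' f'' :: "real \<Rightarrow> real"
  assumes d1: "\<And>x. (f has_real_derivative f' x) (at x)"
    and d2: "\<And>x. (f' has_real_derivative f'' x) (at x)"
    and ode: "\<And>x. f'' x = (p + q) * f' x - p * q * f x"
    and init: "f c = 0" "f' c = 0"
  shows "f x = 0"
proof -
  define Z where "Z y = f' y - q * f y" for y
  have "((\<lambda>y. Z y * exp (- p * y)) has_real_derivative 0) (at t)" for t
  proof -
    have "((\<lambda>y. Z y * exp (- p * y)) has_real_derivative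
        (f'' t - q * f' t) * exp (- p * t) + Z t * (exp (- p * t) * (- p))) (at t)"
      unfolding Z_def using d1 d2 by (auto intro!: derivative_eq_intros)
    moreover have "(f'' t - q * f' t) * exp (- p * t) + Z t * (exp (- p * t) * (- p)) = 0"
      unfolding Z_def ode by (simp add: algebra_simps)
    ultimately show ?thesis by simp
  qed
  then have "Z y * exp (- p * y) = Z c * exp (- p * c)" for y
    by (intro DERIV_isconst_all) auto
  then have Z0: "Z y = 0" for y
    using init by (simp add: Z_def)
  have "((\<lambda>y. f y * exp (- q * y)) has_real_derivative 0) (at t)" for t
  proof -
    have "((\<lambda>y. f y * exp (- q * y)) has_real_derivative
        f' t * exp (- q * t) + f t * (exp (- q * t) * (- q))) (at t)"
      using d1 by (auto intro!: derivative_eq_intros)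
    moreover have "f' t * exp (- q * t) + f t * (exp (- q * t) * (- q)) = Z t * exp (- q * t)"
      unfolding Z_def by (simp add: algebra_simps)
    ultimately show ?thesis using Z0 by simp
  qed
  then have "f x * exp (- q * x) = f c * exp (- q * c)"
    by (intro DERIV_isconst_all) auto
  then show ?thesis using init by simp
qed

lemma power4_le_exp: "0 \<le> v \<Longrightarrow> v ^ 4 \<le> 256 * exp (v::real)"
proof -
  assume v: "0 \<le> v"
  have "(v / 4) ^ 4 \<le> (1 + v / 4) ^ 4" using v by (intro power_mono) auto
  also have "\<dots> \<le> exp (v / 4) ^ 4" using v by (intro power_mono) auto
  also have "\<dots> = exp v" by (simp add: exp_of_nat_mult[symmetric])
  finally show ?thesis by (simp add: power_divide)
qed

lemma nn_integral_le_of_integral_le: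
  fixes f :: "'a \<Rightarrow> real"
  assumes f: "integrable M f" and le: "integral\<^sup>L M f \<le> c"
  shows "(\<integral>\<^sup>+ x. ennreal (f x) \<partial>M) \<le> ennreal c + (\<integral>\<^sup>+ x. ennreal (- f x) \<partial>M)"
proof -
  define A where "A = (\<integral>\<^sup>+ x. ennreal (f x) \<partial>M)"
  define B where "B = (\<integral>\<^sup>+ x. ennreal (- f x) \<partial>M)"
  have fin: "A < \<infinity>" "B < \<infinity>"
    using f unfolding A_def B_def real_integrable_def by (simp_all add: less_top[symmetric])
  have "enn2real A \<le> c + enn2real B"
    using le unfolding real_lebesgue_integral_def[OF f] A_def B_def by simp
  then have "ennreal (enn2real A) \<le> ennreal (c + enn2real B)"
    by (rule ennreal_leI)
  also have "\<dots> \<le> ennreal c + ennreal (enn2real B)"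
    by (simp add: ennreal_plus_if ennreal_leI)
  finally show ?thesis
    using fin unfolding A_def B_def by simp
qed

section \<open>Gaussian integrals and Brownian paths\<close>

definition centered_normal :: "real \<Rightarrow> real measure" where
  "centered_normal s = density lborel (normal_density 0 s)"

lemma prob_space_centered_normal: "s > 0 \<Longrightarrow> prob_space (centered_normal s)"
  unfolding centered_normal_def by (rule prob_space_normal_density)

lemma sets_centered_normal [simp, measurable_cong]: "sets (centered_normal s) = sets borel"
  unfolding centered_normal_def by simp

lemma space_centered_normal [simp]: "space (centered_normal s) = UNIV"
  unfolding centered_normal_def by simp

lemma normal_density_times_exp:
  assumes "s > 0"
  shows "normal_density 0 s z * exp (t * z) = exp (t\<^sup>2 * s\<^sup>2 / 2) * normal_density (t * s\<^sup>2) s z"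
proof -
  have "- (z - 0)\<^sup>2 / (2 * s\<^sup>2) + t * z = t\<^sup>2 * s\<^sup>2 / 2 + - (z - t * s\<^sup>2)\<^sup>2 / (2 * s\<^sup>2)"
    using assms by (simp add: field_simps power2_eq_square)
  then have "exp (- (z - 0)\<^sup>2 / (2 * s\<^sup>2)) * exp (t * z)
      = exp (t\<^sup>2 * s\<^sup>2 / 2) * exp (- (z - t * s\<^sup>2)\<^sup>2 / (2 * s\<^sup>2))"
    by (simp add: exp_add[symmetric])
  then show ?thesis unfolding normal_density_def by (simp add: algebra_simps)
qed

lemma has_bochner_integral_centered_normal_exp:
  assumes s: "s > 0"
  shows "has_bochner_integral (centered_normal s) (\<lambda>z. exp (t * z)) (exp (t\<^sup>2 * s\<^sup>2 / 2))"
proof -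
  have "has_bochner_integral lborel (normal_density (t * s\<^sup>2) s) 1"
    using s by (simp add: has_bochner_integral_iff)
  then have "has_bochner_integral lborel (\<lambda>z. exp (t\<^sup>2 * s\<^sup>2 / 2) * normal_density (t * s\<^sup>2) s z)
      (exp (t\<^sup>2 * s\<^sup>2 / 2) * 1)"
    by (rule has_bochner_integral_mult_right)
  then have "has_bochner_integral lborel (\<lambda>z. normal_density 0 s z * exp (t * z)) (exp (t\<^sup>2 * s\<^sup>2 / 2))"
    using normal_density_times_exp[OF s] by simp
  then show ?thesis
    unfolding centered_normal_def by - (rule has_bochner_integral_density, auto)
qed

lemma has_bochner_integral_centered_normal_exp_affine:
  assumes s: "s > 0"
  shows "has_bochner_integral (centered_normal s) (\<lambda>z. exp (c * (m + b * z)))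
           (exp (c * m + c\<^sup>2 * b\<^sup>2 * s\<^sup>2 / 2))"
proof -
  have "has_bochner_integral (centered_normal s) (\<lambda>z. exp (c * m) * exp ((c * b) * z))
      (exp (c * m) * exp ((c * b)\<^sup>2 * s\<^sup>2 / 2))"
    by (rule has_bochner_integral_mult_right) (rule has_bochner_integral_centered_normal_exp[OF s])
  moreover have "exp (c * m) * exp ((c * b) * z) = exp (c * (m + b * z))" for z
    by (simp add: exp_add[symmetric] algebra_simps)
  moreover have "exp (c * m) * exp ((c * b)\<^sup>2 * s\<^sup>2 / 2) = exp (c * m + c\<^sup>2 * b\<^sup>2 * s\<^sup>2 / 2)"
    by (simp add: exp_add[symmetric] power_mult_distrib)
  ultimately show ?thesis by simp
qed

lemma has_bochner_integral_centered_normal_affine: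
  assumes s: "s > 0"
  shows "has_bochner_integral (centered_normal s) (\<lambda>z. m + b * z) m"
proof -
  interpret prob_space "centered_normal s" by (rule prob_space_centered_normal[OF s])
  have "has_bochner_integral (centered_normal s) (\<lambda>z. z) 0"
    unfolding centered_normal_def
    by (rule has_bochner_integral_density) (use normal_moment_nz_1[OF s, of 0] in auto)
  moreover have "has_bochner_integral (centered_normal s) (\<lambda>z. 1) (1::real)"
    using prob_space by (simp add: has_bochner_integral_iff)
  ultimately have "has_bochner_integral (centered_normal s) (\<lambda>z. m * 1 + b * z) (m * 1 + b * 0)"
    by (intro has_bochner_integral_add has_bochner_integral_mult_right)
  then show ?thesis by simp
qed

lemma (in product_prob_space) nn_integral_restrict_PiM:
  assumes "J \<subseteq> K" "finite K" and f: "f \<in> borel_measurable (PiM J M)"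
  shows "(\<integral>\<^sup>+ d. f (restrict d J) \<partial>PiM K M) = (\<integral>\<^sup>+ d. f d \<partial>PiM J M)"
proof -
  have D: "PiM J M = distr (PiM K M) (PiM J M) (\<lambda>f. restrict f J)"
    by (rule distr_restrict[OF assms(1,2)])
  show ?thesis
    by (subst D, subst nn_integral_distr)
       (use f assms in \<open>auto simp: measurable_restrict_subset simp flip: D\<close>)
qed

lemma std_BM_grid_increments_distr:
  fixes P :: "'a measure" and W :: "real \<Rightarrow> 'a \<Rightarrow> real"
  assumes BM: "std_BM P W" and h: "h > 0" and n: "n > 0"
  shows "distr P (PiM {..<n} (\<lambda>_. borel)) (\<lambda>\<omega>. \<lambda>i\<in>{..<n}. W (real (Suc i) * h) \<omega> - W (real i * h) \<omega>)
           = PiM {..<n} (\<lambda>_. centered_normal (sqrt h))"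
proof -
  interpret prob_space P using BM unfolding std_BM_def by simp
  define D where "D i \<omega> = W (real (Suc i) * h) \<omega> - W (real i * h) \<omega>" for i \<omega>
  have Wm: "W t \<in> borel_measurable P" for t
    using BM unfolding std_BM_def by simp
  have Dm: "D i \<in> borel_measurable P" for i
    unfolding D_def using Wm by measurable
  have indep: "indep_vars (\<lambda>_. borel) D {..<n}"
    using BM h unfolding std_BM_def D_def by (auto elim!: allE[of _ "\<lambda>i. real i * h"])
  have "distr P borel (D i) = centered_normal (sqrt h)" for i
  proof -
    have "distributed P lborel (D i)
        (\<lambda>y. ennreal (normal_density 0 (sqrt (real (Suc i) * h - real i * h)) y))"
      using BM h unfolding std_BM_def D_def by (auto simp: mult_less_cancel_right)
    then have "distr P lborel (D i) = density lborel (\<lambda>y. ennreal (normal_density 0 (sqrt h) y))"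
      unfolding distributed_def by (simp add: algebra_simps)
    moreover have "distr P borel (D i) = distr P lborel (D i)" by (rule distr_cong) auto
    ultimately show ?thesis unfolding centered_normal_def by simp
  qed
  moreover have "distr P (PiM {..<n} (\<lambda>_. borel)) (\<lambda>\<omega>. \<lambda>i\<in>{..<n}. D i \<omega>)
      = PiM {..<n} (\<lambda>i. distr P borel (D i))"
    using indep by (subst (asm) indep_vars_iff_distr_eq_PiM) (use n Dm in auto)
  ultimately show ?thesis
    unfolding D_def by (simp cong: PiM_cong)
qed

lemma nn_integral_std_BM_grid_increments:
  fixes P :: "'a measure" and W :: "real \<Rightarrow> 'a \<Rightarrow> real"
  assumes BM: "std_BM P W" and h: "h > 0" and n: "n > 0"
    and f: "f \<in> borel_measurable (PiM {..<n} (\<lambda>_. centered_normal (sqrt h)))"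
  shows "(\<integral>\<^sup>+ \<omega>. f (\<lambda>i\<in>{..<n}. W (real (Suc i) * h) \<omega> - W (real i * h) \<omega>) \<partial>P)
           = (\<integral>\<^sup>+ d. f d \<partial>PiM {..<n} (\<lambda>_. centered_normal (sqrt h)))"
proof -
  have sets_eq: "sets (PiM {..<n} (\<lambda>_. centered_normal (sqrt h))) = sets (PiM {..<n} (\<lambda>_. borel :: real measure))"
    by (rule sets_PiM_cong) auto
  have f': "f \<in> borel_measurable (PiM {..<n} (\<lambda>_. borel))"
    using f by (simp add: measurable_cong_sets[OF sets_eq refl])
  have Wm: "W t \<in> borel_measurable P" for t
    using BM unfolding std_BM_def by simp
  have "(\<lambda>\<omega>. \<lambda>i\<in>{..<n}. W (real (Suc i) * h) \<omega> - W (real i * h) \<omega>) \<in> P \<rightarrow>\<^sub>M PiM {..<n} (\<lambda>_. borel)"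
    by (rule measurable_restrict) (simp add: Wm borel_measurable_diff)
  then show ?thesis
    unfolding std_BM_grid_increments_distr[OF BM h n, symmetric]
    by (rule nn_integral_distr[symmetric]) (use f' in simp)
qed

lemma Xproc_pos_before_hit0:
  assumes W0: "W 0 \<omega> = 0" and cont: "continuous_on {0..} (\<lambda>t. W t \<omega>)"
    and x: "x > 0" and hit: "hit0 \<mu> \<sigma> W x \<omega> > ereal \<Delta>" and t: "0 \<le> t" "t \<le> \<Delta>"
  shows "Xproc \<mu> \<sigma> W x t \<omega> > 0"
proof (rule ccontr)
  define X where "X s = Xproc \<mu> \<sigma> W x s \<omega>" for s
  assume "\<not> Xproc \<mu> \<sigma> W x t \<omega> > 0"
  then have "X t \<le> 0" by (simp add: X_def)
  moreover have "0 \<le> X 0"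
    using W0 x by (simp add: X_def Xproc_def)
  moreover have "continuous_on {0..t} X"
    unfolding X_def Xproc_def using continuous_on_subset[OF cont, of "{0..t}"]
    by (auto intro!: continuous_intros)
  ultimately obtain s where s: "0 \<le> s" "s \<le> t" "X s = 0"
    using IVT2'[of X t 0 0] t by blast
  then have "hit0 \<mu> \<sigma> W x \<omega> \<le> ereal s"
    unfolding hit0_def X_def by (intro Inf_lower) auto
  with hit have "ereal \<Delta> < ereal s"
    by (rule less_le_trans)
  then show False
    using s t by simp
qed

section \<open>The explicit solution and the value function\<close>

locale drift_diffusion =
  fixes \<mu> \<sigma> \<rho> :: real
  assumes mu_pos: "\<mu> > 0" and sigma_pos: "\<sigma> > 0" and rho_pos: "\<rho> > 0"
begin

abbreviation "R1 \<equiv> r1 \<mu> \<sigma> \<rho>"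
abbreviation "R2 \<equiv> r2 \<mu> \<sigma> \<rho>"
abbreviation "U0 \<equiv> u0 \<mu> \<sigma> \<rho>"

lemma sqrt_discriminant_gt_mu: "sqrt (\<mu>\<^sup>2 + 2 * \<sigma>\<^sup>2 * \<rho>) > \<mu>"
proof -
  have "sqrt (\<mu>\<^sup>2) < sqrt (\<mu>\<^sup>2 + 2 * \<sigma>\<^sup>2 * \<rho>)"
    using sigma_pos rho_pos by (intro real_sqrt_less_mono) simp
  then show ?thesis using mu_pos by simp
qed

lemma r1_pos: "R1 > 0"
  using sqrt_discriminant_gt_mu sigma_pos by (simp add: r1_def)

lemma r2_pos: "R2 > 0"
  using sqrt_discriminant_gt_mu sigma_pos mu_pos by (simp add: r2_def)

lemma r2_minus_r1: "R2 - R1 = 2 * \<mu> / \<sigma>\<^sup>2"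
  using sigma_pos by (simp add: r1_def r2_def field_simps)

lemma r1_times_r2: "R1 * R2 = 2 * \<rho> / \<sigma>\<^sup>2"
proof -
  have "(sqrt (\<mu>\<^sup>2 + 2 * \<sigma>\<^sup>2 * \<rho>))\<^sup>2 = \<mu>\<^sup>2 + 2 * \<sigma>\<^sup>2 * \<rho>"
    using rho_pos by simp
  then have "R1 * R2 = ((\<mu>\<^sup>2 + 2 * \<sigma>\<^sup>2 * \<rho>) - \<mu>\<^sup>2) / (\<sigma>\<^sup>2)\<^sup>2"
    unfolding r1_def r2_def by (simp add: field_simps power2_eq_square)
  also have "\<dots> = 2 * \<rho> / \<sigma>\<^sup>2"
    using sigma_pos by (simp add: field_simps power2_eq_square)
  finally show ?thesis .
qed

lemma r1_characteristic: "\<sigma>\<^sup>2 * R1\<^sup>2 / 2 + \<mu> * R1 = \<rho>"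
proof -
  have "\<sigma>\<^sup>2 * R1\<^sup>2 / 2 + \<mu> * R1 = R1 * (\<sigma>\<^sup>2 * R1 + 2 * \<mu>) / 2"
    by (simp add: field_simps power2_eq_square)
  also have "\<sigma>\<^sup>2 * R1 + 2 * \<mu> = \<sigma>\<^sup>2 * R2"
    using r2_minus_r1 sigma_pos by (simp add: field_simps)
  also have "R1 * (\<sigma>\<^sup>2 * R2) / 2 = \<rho>"
    using r1_times_r2 sigma_pos by (simp add: field_simps)
  finally show ?thesis .
qed

lemma r2_characteristic: "\<sigma>\<^sup>2 * R2\<^sup>2 / 2 - \<mu> * R2 = \<rho>"
proof -
  have "\<sigma>\<^sup>2 * R2\<^sup>2 / 2 - \<mu> * R2 = R2 * (\<sigma>\<^sup>2 * R2 - 2 * \<mu>) / 2"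
    by (simp add: field_simps power2_eq_square)
  also have "\<sigma>\<^sup>2 * R2 - 2 * \<mu> = \<sigma>\<^sup>2 * R1"
    using r2_minus_r1 sigma_pos by (simp add: field_simps)
  also have "R2 * (\<sigma>\<^sup>2 * R1) / 2 = \<rho>"
    using r1_times_r2 sigma_pos by (simp add: field_simps)
  finally show ?thesis .
qed

lemma rho_gt_mu_r1: "\<rho> - \<mu> * R1 > 0"
proof -
  have "\<rho> - \<mu> * R1 = \<sigma>\<^sup>2 * R1\<^sup>2 / 2"
    using r1_characteristic by simp
  moreover have "\<sigma>\<^sup>2 * R1\<^sup>2 / 2 > 0"
    using sigma_pos r1_pos by simp
  ultimately show ?thesis by linarith
qed

lemma u0_pos: "U0 > 0"
proof -
  have "(\<rho> + \<mu> * R2) / (\<rho> - \<mu> * R1) > 1"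
    using rho_gt_mu_r1 mult_pos_pos[OF mu_pos r1_pos] mult_pos_pos[OF mu_pos r2_pos]
    by (simp add: field_simps)
  then show ?thesis unfolding u0_def using r1_pos r2_pos by simp
qed

lemma exp_u0: "exp ((R1 + R2) * U0) = (\<rho> + \<mu> * R2) / (\<rho> - \<mu> * R1)"
proof -
  have "(\<rho> + \<mu> * R2) / (\<rho> - \<mu> * R1) > 0"
    using rho_gt_mu_r1 rho_pos mult_pos_pos[OF mu_pos r2_pos] by simp
  moreover have "(R1 + R2) * U0 = ln ((\<rho> + \<mu> * R2) / (\<rho> - \<mu> * R1))"
    unfolding u0_def using r1_pos r2_pos by simp
  ultimately show ?thesis by simp
qed

text \<open>The solution of \<open>(A - \<rho>) F = 0\<close> with \<open>F 0 = 0\<close>; the factor \<open>\<kappa>\<close> is fixed by \<open>F' U0 = 1\<close>.\<close>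
definition \<kappa> :: real where
  "\<kappa> = (\<rho> + \<mu> * R2) / (\<rho> * (R1 + R2)) * exp (- R1 * U0)"

definition F :: "real \<Rightarrow> real" where
  "F y = \<kappa> * (exp (R1 * y) - exp (- R2 * y))"

definition F' :: "real \<Rightarrow> real" where
  "F' y = \<kappa> * (R1 * exp (R1 * y) + R2 * exp (- R2 * y))"

definition F'' :: "real \<Rightarrow> real" where
  "F'' y = \<kappa> * (R1\<^sup>2 * exp (R1 * y) - R2\<^sup>2 * exp (- R2 * y))"

lemma kappa_pos: "\<kappa> > 0"
  unfolding \<kappa>_def using mu_pos rho_pos r1_pos r2_pos
  by (intro mult_pos_pos divide_pos_pos add_pos_pos) auto

lemma kappa_exp_r1_u0: "\<kappa> * exp (R1 * U0) = (\<rho> + \<mu> * R2) / (\<rho> * (R1 + R2))"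
proof -
  have "exp (- R1 * U0) * exp (R1 * U0) = 1"
    by (simp add: exp_minus)
  then show ?thesis
    unfolding \<kappa>_def by (metis mult.assoc mult.right_neutral)
qed

lemma kappa_exp_r2_u0: "\<kappa> * exp (- R2 * U0) = (\<rho> - \<mu> * R1) / (\<rho> * (R1 + R2))"
proof -
  have "\<kappa> * exp (- R2 * U0) = (\<rho> + \<mu> * R2) / (\<rho> * (R1 + R2)) * exp (- ((R1 + R2) * U0))"
    by (simp add: \<kappa>_def mult.assoc exp_add[symmetric] algebra_simps)
  also have "exp (- ((R1 + R2) * U0)) = (\<rho> - \<mu> * R1) / (\<rho> + \<mu> * R2)"
    unfolding exp_minus exp_u0 by simp
  finally show ?thesis
    using rho_pos mult_pos_pos[OF mu_pos r2_pos] by simp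
qed

lemma F_0: "F 0 = 0"
  unfolding F_def by simp

lemma F_u0: "F U0 = \<mu> / \<rho>"
proof -
  have "F U0 = \<kappa> * exp (R1 * U0) - \<kappa> * exp (- R2 * U0)"
    unfolding F_def by (simp add: algebra_simps)
  also have "\<dots> = \<mu> * (R1 + R2) / (\<rho> * (R1 + R2))"
    unfolding kappa_exp_r1_u0 kappa_exp_r2_u0 by (simp add: diff_divide_distrib[symmetric] algebra_simps)
  also have "\<dots> = \<mu> / \<rho>"
    using r1_pos r2_pos by simp
  finally show ?thesis .
qed

lemma F'_u0: "F' U0 = 1"
proof -
  have "F' U0 = R1 * (\<kappa> * exp (R1 * U0)) + R2 * (\<kappa> * exp (- R2 * U0))"
    unfolding F'_def by (simp add: algebra_simps)
  also have "\<dots> = (\<rho> * (R1 + R2)) / (\<rho> * (R1 + R2))"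
    unfolding kappa_exp_r1_u0 kappa_exp_r2_u0 by (simp add: add_divide_distrib[symmetric] algebra_simps)
  also have "\<dots> = 1"
    using r1_pos r2_pos rho_pos by simp
  finally show ?thesis .
qed

lemma F''_u0: "F'' U0 = 0"
proof -
  have "F'' U0 = R1\<^sup>2 * (\<kappa> * exp (R1 * U0)) - R2\<^sup>2 * (\<kappa> * exp (- R2 * U0))"
    unfolding F''_def by (simp add: algebra_simps)
  also have "\<dots> = (R1 + R2) * (\<rho> * (R1 - R2) + \<mu> * (R1 * R2)) / (\<rho> * (R1 + R2))"
    unfolding kappa_exp_r1_u0 kappa_exp_r2_u0
    by (simp add: diff_divide_distrib[symmetric] algebra_simps power2_eq_square)
  also have "\<rho> * (R1 - R2) + \<mu> * (R1 * R2) = 0"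
    using r2_minus_r1 r1_times_r2 by (simp add: field_simps)
  finally show ?thesis by simp
qed

lemma F_deriv: "(F has_real_derivative F' y) (at y)"
  unfolding F_def F'_def by (auto intro!: derivative_eq_intros simp: algebra_simps)

lemma F'_deriv: "(F' has_real_derivative F'' y) (at y)"
  unfolding F'_def F''_def by (auto intro!: derivative_eq_intros simp: algebra_simps power2_eq_square)

lemma F_ode: "1/2 * \<sigma>\<^sup>2 * F'' y + \<mu> * F' y - \<rho> * F y = 0"
proof -
  have "1/2 * \<sigma>\<^sup>2 * F'' y + \<mu> * F' y - \<rho> * F y =
      \<kappa> * exp (R1 * y) * (\<sigma>\<^sup>2 * R1\<^sup>2 / 2 + \<mu> * R1 - \<rho>)
    - \<kappa> * exp (- R2 * y) * (\<sigma>\<^sup>2 * R2\<^sup>2 / 2 - \<mu> * R2 - \<rho>)"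
    unfolding F_def F'_def F''_def by (simp add: algebra_simps)
  then show ?thesis using r1_characteristic r2_characteristic by simp
qed

lemma ode_solution_eq_F:
  fixes V0 V0' V0'' :: "real \<Rightarrow> real"
  assumes d1: "\<And>x. (V0 has_real_derivative V0' x) (at x)"
    and d2: "\<And>x. (V0' has_real_derivative V0'' x) (at x)"
    and ode: "\<And>x. 1/2 * \<sigma>\<^sup>2 * V0'' x + \<mu> * V0' x - \<rho> * V0 x = 0"
    and init: "V0 U0 = \<mu> / \<rho>" "V0' U0 = 1"
  shows "V0 = F"
proof
  fix x
  have "(\<lambda>y. V0 y - F y) x = 0"
  proof (rule linear_ode_zero_initial_unique[where f = "\<lambda>y. V0 y - F y" and f' = "\<lambda>y. V0' y - F' y"
        and f'' = "\<lambda>y. V0'' y - F'' y" and p = R1 and q = "- R2" and c = U0])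
    show "((\<lambda>y. V0 y - F y) has_real_derivative V0' y - F' y) (at y)" for y
      using d1 F_deriv by (auto intro!: derivative_eq_intros)
    show "((\<lambda>y. V0' y - F' y) has_real_derivative V0'' y - F'' y) (at y)" for y
      using d2 F'_deriv by (auto intro!: derivative_eq_intros)
    show "V0'' y - F'' y = (R1 + - R2) * (V0' y - F' y) - R1 * - R2 * (V0 y - F y)" for y
    proof -
      have "V0'' y = 2 * (\<rho> * V0 y - \<mu> * V0' y) / \<sigma>\<^sup>2" "F'' y = 2 * (\<rho> * F y - \<mu> * F' y) / \<sigma>\<^sup>2"
        using ode[of y] F_ode[of y] sigma_pos by (simp_all add: field_simps)
      then have "V0'' y - F'' y = - (2 * \<mu> / \<sigma>\<^sup>2) * (V0' y - F' y) + 2 * \<rho> / \<sigma>\<^sup>2 * (V0 y - F y)"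
        by (simp only:) (simp add: algebra_simps diff_divide_distrib add_divide_distrib)
      moreover have "R1 + - R2 = - (2 * \<mu> / \<sigma>\<^sup>2)" "R1 * - R2 = - (2 * \<rho> / \<sigma>\<^sup>2)"
        using r2_minus_r1 r1_times_r2 by simp_all
      ultimately show ?thesis
        by simp
    qed
  qed (use init F_u0 F'_u0 in auto)
  then show "V0 x = F x" by simp
qed

lemma F''_mono: "y \<le> z \<Longrightarrow> F'' y \<le> F'' z"
proof -
  assume yz: "y \<le> z"
  have "exp (R1 * y) \<le> exp (R1 * z)" "exp (- R2 * z) \<le> exp (- R2 * y)"
    using yz r1_pos r2_pos by simp_all
  then have "R1\<^sup>2 * exp (R1 * y) - R2\<^sup>2 * exp (- R2 * y) \<le> R1\<^sup>2 * exp (R1 * z) - R2\<^sup>2 * exp (- R2 * z)"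
    by (intro diff_mono mult_left_mono) auto
  then show ?thesis unfolding F''_def using kappa_pos by (simp add: mult_left_mono)
qed

text \<open>\<open>F''\<close> changes sign at \<open>U0\<close>, where \<open>F'\<close> attains its minimum \<open>1\<close>.\<close>
lemma F'_ge_1: "F' y \<ge> 1"
proof (cases "y \<le> U0")
  case True
  have "F' U0 \<le> F' y"
    by (rule DERIV_nonpos_imp_nonincreasing[OF True])
       (use F'_deriv F''_mono[of _ U0] F''_u0 in auto)
  then show ?thesis using F'_u0 by simp
next
  case False
  have "F' U0 \<le> F' y"
    by (rule DERIV_nonneg_imp_nondecreasing[of U0])
       (use False F'_deriv F''_mono[of U0] F''_u0 in auto)
  then show ?thesis using F'_u0 by simp
qed

lemma F_mono:
  assumes "y \<le> z"
  shows "F y \<le> F z"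
proof (rule DERIV_nonneg_imp_nondecreasing[where f = F, OF assms])
  show "\<exists>d. (F has_real_derivative d) (at x) \<and> 0 \<le> d" for x
    using F_deriv[of x] F'_ge_1[of x] by auto
qed

definition L :: "real \<Rightarrow> real" where
  "L y = y - U0 + \<mu> / \<rho>"

definition U :: "real \<Rightarrow> real" where
  "U y = (if y \<le> U0 then F y else L y)"

definition U' :: "real \<Rightarrow> real" where
  "U' y = (if y \<le> U0 then F' y else 1)"

definition U'' :: "real \<Rightarrow> real" where
  "U'' y = (if y \<le> U0 then F'' y else 0)"

lemma F_minus_L_mono: "y \<le> z \<Longrightarrow> F y - L y \<le> F z - L z"
  by (rule DERIV_nonneg_imp_nondecreasing[where f = "\<lambda>t. F t - L t"])
     (use F'_ge_1 in \<open>auto simp: L_def intro!: exI derivative_eq_intros F_deriv\<close>)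

lemma U_eq_min: "U y = min (F y) (L y)"
proof -
  have "F U0 - L U0 = 0" by (simp add: L_def F_u0)
  then show ?thesis
    using F_minus_L_mono[of y U0] F_minus_L_mono[of U0 y] unfolding U_def by auto
qed

lemma U_deriv: "(U has_real_derivative U' y) (at y)"
  unfolding U_def[abs_def] U'_def
  by (rule has_real_derivative_paste)
     (use F_deriv F_u0 F'_u0 in \<open>auto simp: L_def intro!: derivative_eq_intros\<close>)

lemma U'_deriv: "(U' has_real_derivative U'' y) (at y)"
  unfolding U'_def[abs_def] U''_def
  by (rule has_real_derivative_paste) (use F'_deriv F'_u0 F''_u0 in auto)

lemma continuous_on_U'': "continuous_on A U''"
proof -
  have "U'' = (\<lambda>y. F'' (min y U0))"
    unfolding U''_def using F''_u0 by (auto simp: min_def)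
  then show ?thesis unfolding F''_def by (simp add: continuous_intros)
qed

lemma continuous_on_U: "continuous_on A U"
  using U_deriv by (meson DERIV_isCont continuous_at_imp_continuous_on)

lemma U_borel [measurable]: "U \<in> borel_measurable borel"
  by (rule borel_measurable_continuous_onI) (rule continuous_on_U)

lemma U'_ge_1: "U' y \<ge> 1"
  unfolding U'_def using F'_ge_1 by simp

lemma U_0: "U 0 = 0"
  unfolding U_def using u0_pos F_0 by simp

lemma generator_U_nonpos: "1/2 * \<sigma>\<^sup>2 * U'' y + \<mu> * U' y - \<rho> * U y \<le> 0"
proof (cases "y \<le> U0")
  case True
  then show ?thesis using F_ode[of y] unfolding U_def U'_def U''_def by simp
next
  case False
  then have "1/2 * \<sigma>\<^sup>2 * U'' y + \<mu> * U' y - \<rho> * U y = - \<rho> * (y - U0)"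
    unfolding U_def U'_def U''_def L_def using rho_pos by (simp add: algebra_simps)
  then show ?thesis using False rho_pos by simp
qed

lemma generator_U_times_U'_minus_1: "(1/2 * \<sigma>\<^sup>2 * U'' y + \<mu> * U' y - \<rho> * U y) * (U' y - 1) = 0"
  using F_ode[of y] unfolding U_def U'_def U''_def by simp

lemma U_minus_id_mono: "y \<le> z \<Longrightarrow> U y - y \<le> U z - z"
  by (rule DERIV_nonneg_imp_nondecreasing[where f = "\<lambda>t. U t - t"])
     (use U'_ge_1 in \<open>auto intro!: exI derivative_eq_intros U_deriv\<close>)

lemma U_minus_id_le: "U y - y \<le> \<mu> / \<rho> - U0"
proof (cases "y \<le> U0")
  case True
  then have "U y - y \<le> U U0 - U0" by (rule U_minus_id_mono)
  then show ?thesis unfolding U_def using F_u0 by simp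
next
  case False
  then show ?thesis unfolding U_def L_def by simp
qed

lemma U_ge_id: "0 \<le> y \<Longrightarrow> y \<le> U y"
  using U_minus_id_mono[of 0 y] U_0 by simp

lemma U_nonpos: "y \<le> 0 \<Longrightarrow> U y \<le> 0"
  using F_mono[of y 0] F_0 u0_pos unfolding U_def by simp

text \<open>\<open>loss u = - U (- u)\<close> is what the killed value loses when a step of the walk overshoots
  the barrier \<open>0\<close> to \<open>- u\<close>.\<close>
definition loss :: "real \<Rightarrow> real" where
  "loss u = \<kappa> * (exp (R2 * u) - exp (- R1 * u))"

lemma U_neg_eq_loss: "y \<le> 0 \<Longrightarrow> U y = - loss (- y)"
  using u0_pos unfolding U_def F_def loss_def by (simp add: algebra_simps)

lemma loss_mono: "u \<le> v \<Longrightarrow> loss u \<le> loss v"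
proof -
  assume uv: "u \<le> v"
  have "exp (R2 * u) \<le> exp (R2 * v)" "exp (- R1 * v) \<le> exp (- R1 * u)"
    using uv r1_pos r2_pos by simp_all
  then have "exp (R2 * u) - exp (- R1 * u) \<le> exp (R2 * v) - exp (- R1 * v)"
    by linarith
  then show ?thesis unfolding loss_def using kappa_pos by (simp add: mult_left_mono)
qed

lemma loss_0: "loss 0 = 0"
  unfolding loss_def by simp

lemma loss_le: "loss u \<le> \<kappa> * exp (R2 * u)"
  unfolding loss_def using kappa_pos by (simp add: mult_left_mono)

lemma loss_small: "e > 0 \<Longrightarrow> \<exists>a>0. loss a < e"
proof -
  assume e: "e > 0"
  have "(loss \<longlongrightarrow> 0) (at_right 0)"
    unfolding loss_def by (rule tendsto_eq_intros refl | simp)+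
  then have "\<forall>\<^sub>F a in at_right 0. loss a < e"
    using e by (rule order_tendstoD(2))
  then have "\<forall>\<^sub>F a in at_right 0. 0 < a \<and> loss a < e"
    using eventually_at_right_less by (rule eventually_conj[rotated])
  then show ?thesis
    using eventually_happens'[OF trivial_limit_at_right_real] by blast
qed

section \<open>One step of the discretised diffusion\<close>

text \<open>A root \<open>c\<close> of the characteristic polynomial makes \<open>exp (- \<rho> t + c X(t))\<close> a martingale;
  here over one step of length \<open>h\<close>.\<close>
lemma has_bochner_integral_exp_step:
  assumes h: "h > 0" and c: "\<sigma>\<^sup>2 * c\<^sup>2 / 2 + \<mu> * c = \<rho>"
  shows "has_bochner_integral (centered_normal (sqrt h))
           (\<lambda>z. exp (- \<rho> * h) * exp (c * (y + \<mu> * h + \<sigma> * z))) (exp (c * y))"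
proof -
  have "has_bochner_integral (centered_normal (sqrt h))
      (\<lambda>z. exp (- \<rho> * h) * exp (c * ((y + \<mu> * h) + \<sigma> * z)))
      (exp (- \<rho> * h) * exp (c * (y + \<mu> * h) + c\<^sup>2 * \<sigma>\<^sup>2 * (sqrt h)\<^sup>2 / 2))"
    using h by (intro has_bochner_integral_mult_right has_bochner_integral_centered_normal_exp_affine) simp
  moreover have "- \<rho> * h + (c * (y + \<mu> * h) + c\<^sup>2 * \<sigma>\<^sup>2 * (sqrt h)\<^sup>2 / 2)
      = c * y + h * (\<sigma>\<^sup>2 * c\<^sup>2 / 2 + \<mu> * c - \<rho>)"
    using h by (simp add: algebra_simps)
  ultimately show ?thesis
    using c by (simp add: exp_add[symmetric])
qed

lemma has_bochner_integral_F_step: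
  assumes h: "h > 0"
  shows "has_bochner_integral (centered_normal (sqrt h))
           (\<lambda>z. exp (- \<rho> * h) * F (y + \<mu> * h + \<sigma> * z)) (F y)"
proof -
  have "has_bochner_integral (centered_normal (sqrt h))
      (\<lambda>z. \<kappa> * (exp (- \<rho> * h) * exp (R1 * (y + \<mu> * h + \<sigma> * z))
               - exp (- \<rho> * h) * exp ((- R2) * (y + \<mu> * h + \<sigma> * z))))
      (\<kappa> * (exp (R1 * y) - exp ((- R2) * y)))"
    using r1_characteristic r2_characteristic
    by (intro has_bochner_integral_mult_right has_bochner_integral_diff
          has_bochner_integral_exp_step[OF h]) simp_all
  then show ?thesis
    by (simp add: F_def right_diff_distrib mult.left_commute)
qed

lemma has_bochner_integral_L_step:
  assumes h: "h > 0"
  shows "has_bochner_integral (centered_normal (sqrt h))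
           (\<lambda>z. exp (- \<rho> * h) * L (y + \<mu> * h + \<sigma> * z)) (exp (- \<rho> * h) * (L y + \<mu> * h))"
proof -
  have "has_bochner_integral (centered_normal (sqrt h))
      (\<lambda>z. exp (- \<rho> * h) * ((L y + \<mu> * h) + \<sigma> * z)) (exp (- \<rho> * h) * (L y + \<mu> * h))"
    using h by (intro has_bochner_integral_mult_right has_bochner_integral_centered_normal_affine) simp
  then show ?thesis
    by (simp add: L_def algebra_simps)
qed

lemma integrable_U_step:
  assumes h: "h > 0"
  shows "integrable (centered_normal (sqrt h)) (\<lambda>z. exp (- \<rho> * h) * U (y + \<mu> * h + \<sigma> * z))"
proof (rule Bochner_Integration.integrable_bound)
  show "integrable (centered_normal (sqrt h))
      (\<lambda>z. \<bar>exp (- \<rho> * h) * F (y + \<mu> * h + \<sigma> * z)\<bar> + \<bar>exp (- \<rho> * h) * L (y + \<mu> * h + \<sigma> * z)\<bar>)"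
    using integrable.intros[OF has_bochner_integral_F_step[OF h, of y]]
      integrable.intros[OF has_bochner_integral_L_step[OF h, of y]]
    by simp
  show "AE z in centered_normal (sqrt h). norm (exp (- \<rho> * h) * U (y + \<mu> * h + \<sigma> * z))
      \<le> norm (\<bar>exp (- \<rho> * h) * F (y + \<mu> * h + \<sigma> * z)\<bar> + \<bar>exp (- \<rho> * h) * L (y + \<mu> * h + \<sigma> * z)\<bar>)"
    unfolding U_def by (auto simp: abs_mult)
qed measurable

lemma exp_neg_L_step_le:
  assumes "U0 \<le> y" "0 \<le> h"
  shows "exp (- \<rho> * h) * (L y + \<mu> * h) \<le> L y"
proof -
  have L: "\<mu> \<le> \<rho> * L y"
    using assms rho_pos unfolding L_def by (simp add: field_simps)
  have "L y + \<mu> * h \<le> L y * (1 + \<rho> * h)"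
    using mult_right_mono[OF L assms(2)] by (simp add: algebra_simps)
  also have "\<dots> \<le> L y * exp (\<rho> * h)"
    using assms mu_pos rho_pos unfolding L_def by (intro mult_left_mono) auto
  finally show ?thesis
    by (simp add: exp_minus field_simps)
qed

lemma U_step_le:
  assumes h: "h > 0"
  shows "(\<integral>z. exp (- \<rho> * h) * U (y + \<mu> * h + \<sigma> * z) \<partial>centered_normal (sqrt h)) \<le> U y"
proof (cases "y \<le> U0")
  case True
  have "(\<integral>z. exp (- \<rho> * h) * U (y + \<mu> * h + \<sigma> * z) \<partial>centered_normal (sqrt h))
      \<le> (\<integral>z. exp (- \<rho> * h) * F (y + \<mu> * h + \<sigma> * z) \<partial>centered_normal (sqrt h))"
    by (rule integral_mono[OF integrable_U_step[OF h] integrable.intros[OF has_bochner_integral_F_step[OF h]]])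
       (intro mult_left_mono, auto simp: U_eq_min)
  also have "\<dots> = F y"
    using has_bochner_integral_F_step[OF h] by (rule has_bochner_integral_integral_eq)
  finally show ?thesis
    using True unfolding U_def by simp
next
  case False
  have "(\<integral>z. exp (- \<rho> * h) * U (y + \<mu> * h + \<sigma> * z) \<partial>centered_normal (sqrt h))
      \<le> (\<integral>z. exp (- \<rho> * h) * L (y + \<mu> * h + \<sigma> * z) \<partial>centered_normal (sqrt h))"
    by (rule integral_mono[OF integrable_U_step[OF h] integrable.intros[OF has_bochner_integral_L_step[OF h]]])
       (intro mult_left_mono, auto simp: U_eq_min)
  also have "\<dots> = exp (- \<rho> * h) * (L y + \<mu> * h)"
    using has_bochner_integral_L_step[OF h] by (rule has_bochner_integral_integral_eq)
  also have "\<dots> \<le> L y"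
    using False h by (intro exp_neg_L_step_le) auto
  finally show ?thesis
    using False unfolding U_def by simp
qed

lemma U_step_nn_integral_le:
  assumes h: "h > 0"
  shows "(\<integral>\<^sup>+ z. ennreal (exp (- \<rho> * h) * U (y + \<mu> * h + \<sigma> * z)) \<partial>centered_normal (sqrt h))
     \<le> ennreal (U y) + (\<integral>\<^sup>+ z. ennreal (- U (y + \<mu> * h + \<sigma> * z)) \<partial>centered_normal (sqrt h))"
proof -
  have discount: "ennreal (- (exp (- \<rho> * h) * u)) \<le> ennreal (- u)" for u
  proof (cases "u \<ge> 0")
    case False
    have "exp (- \<rho> * h) \<le> 1" using rho_pos h by simp
    then show ?thesis
      using False by (intro ennreal_leI) (simp add: mult_left_le_one_le)
  qed (simp add: ennreal_neg)
  have "(\<integral>\<^sup>+ z. ennreal (exp (- \<rho> * h) * U (y + \<mu> * h + \<sigma> * z)) \<partial>centered_normal (sqrt h))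
      \<le> ennreal (U y) + (\<integral>\<^sup>+ z. ennreal (- (exp (- \<rho> * h) * U (y + \<mu> * h + \<sigma> * z))) \<partial>centered_normal (sqrt h))"
    by (rule nn_integral_le_of_integral_le[OF integrable_U_step[OF h] U_step_le[OF h]])
  also have "\<dots> \<le> ennreal (U y) + (\<integral>\<^sup>+ z. ennreal (- U (y + \<mu> * h + \<sigma> * z)) \<partial>centered_normal (sqrt h))"
    by (intro add_left_mono nn_integral_mono discount)
  finally show ?thesis .
qed

section \<open>The killed random walk\<close>

text \<open>The diffusion observed on the grid \<open>0, h, 2h, \<dots>\<close>: \<open>d i\<close> is the Brownian increment over
  the \<open>i\<close>-th step, and the walk is killed at the first grid point where it is \<open>\<le> 0\<close>.\<close>
definition walk :: "real \<Rightarrow> real \<Rightarrow> nat \<Rightarrow> (nat \<Rightarrow> real) \<Rightarrow> real" where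
  "walk h x k d = x + (\<Sum>i<k. \<mu> * h + \<sigma> * d i)"

definition alive :: "real \<Rightarrow> real \<Rightarrow> nat \<Rightarrow> (nat \<Rightarrow> real) \<Rightarrow> bool" where
  "alive h x k d \<longleftrightarrow> (\<forall>j\<in>{..k}. 0 < walk h x j d)"

definition gauss_steps :: "real \<Rightarrow> nat \<Rightarrow> (nat \<Rightarrow> real) measure" where
  "gauss_steps h m = PiM {..<m} (\<lambda>_. centered_normal (sqrt h))"

definition killed_value :: "real \<Rightarrow> real \<Rightarrow> nat \<Rightarrow> ennreal" where
  "killed_value h x k = (\<integral>\<^sup>+ d. ennreal (if alive h x k d then exp (- \<rho> * h * k) * U (walk h x k d) else 0)
     \<partial>gauss_steps h k)"

definition kill_error :: "real \<Rightarrow> real \<Rightarrow> nat \<Rightarrow> ennreal" where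
  "kill_error h x k = (\<integral>\<^sup>+ d. ennreal (if alive h x k d then - U (walk h x (Suc k) d) else 0)
     \<partial>gauss_steps h (Suc k))"

lemma walk_fun_upd: "j \<le> k \<Longrightarrow> walk h x j (d(k := z)) = walk h x j d"
  unfolding walk_def by (intro arg_cong[where f = "\<lambda>s. x + s"] sum.cong) auto

lemma walk_restrict: "j \<le> m \<Longrightarrow> walk h x j (restrict d {..<m}) = walk h x j d"
  unfolding walk_def by (intro arg_cong[where f = "\<lambda>s. x + s"] sum.cong) auto

lemma walk_Suc: "walk h x (Suc k) d = walk h x k d + (\<mu> * h + \<sigma> * d k)"
  unfolding walk_def by simp

lemma alive_fun_upd: "alive h x k (d(k := z)) \<longleftrightarrow> alive h x k d"
  unfolding alive_def by (simp add: walk_fun_upd)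

lemma alive_restrict: "k \<le> m \<Longrightarrow> alive h x k (restrict d {..<m}) \<longleftrightarrow> alive h x k d"
  unfolding alive_def by (simp add: walk_restrict)

lemma alive_Suc: "alive h x (Suc k) d \<longleftrightarrow> alive h x k d \<and> 0 < walk h x (Suc k) d"
  unfolding alive_def by (auto simp: atMost_Suc)

lemma walk_pos_if_alive: "alive h x k d \<Longrightarrow> j \<le> k \<Longrightarrow> 0 < walk h x j d"
  unfolding alive_def by simp

lemma measurable_walk [measurable]:
  "j \<le> m \<Longrightarrow> (\<lambda>d. walk h x j d) \<in> borel_measurable (gauss_steps h m)"
  unfolding walk_def gauss_steps_def
  by (intro borel_measurable_add borel_measurable_const borel_measurable_sum borel_measurable_times
        measurable_compose[OF measurable_component_singleton]) (auto simp: measurable_ident_sets)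

lemma measurable_alive [measurable]: "k \<le> m \<Longrightarrow> Measurable.pred (gauss_steps h m) (alive h x k)"
  unfolding alive_def by measurable

lemma prob_space_gauss_steps: "h > 0 \<Longrightarrow> prob_space (gauss_steps h m)"
  unfolding gauss_steps_def by (intro prob_space_PiM prob_space_centered_normal) simp

lemma killed_value_0: "h > 0 \<Longrightarrow> x > 0 \<Longrightarrow> killed_value h x 0 = ennreal (U x)"
  using prob_space.emeasure_space_1[OF prob_space_gauss_steps[of h 0]]
  by (simp add: killed_value_def alive_def walk_def)

text \<open>One step of the killed walk from a level \<open>y > 0\<close>: besides the supermartingale
  inequality, killing can only increase the value by the negative part of \<open>U\<close>.\<close>
lemma alive_step_nn_integral_le:
  assumes h: "h > 0" and y: "y > 0" and e: "0 \<le> e" "e \<le> 1"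
  shows "(\<integral>\<^sup>+ z. ennreal (if 0 < y + \<mu> * h + \<sigma> * z then e * (exp (- \<rho> * h) * U (y + \<mu> * h + \<sigma> * z)) else 0)
            \<partial>centered_normal (sqrt h))
         \<le> ennreal (e * U y) + (\<integral>\<^sup>+ z. ennreal (- U (y + \<mu> * h + \<sigma> * z)) \<partial>centered_normal (sqrt h))"
    (is "?lhs \<le> _ + ?neg")
proof -
  have "?lhs = (\<integral>\<^sup>+ z. ennreal e * ennreal (exp (- \<rho> * h) * U (y + \<mu> * h + \<sigma> * z)) \<partial>centered_normal (sqrt h))"
  proof (intro nn_integral_cong)
    fix z
    have "U (y + \<mu> * h + \<sigma> * z) \<le> 0" if "\<not> 0 < y + \<mu> * h + \<sigma> * z"
      using that by (intro U_nonpos) simp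
    then show "ennreal (if 0 < y + \<mu> * h + \<sigma> * z then e * (exp (- \<rho> * h) * U (y + \<mu> * h + \<sigma> * z)) else 0)
        = ennreal e * ennreal (exp (- \<rho> * h) * U (y + \<mu> * h + \<sigma> * z))"
      using e by (auto simp: ennreal_mult'[symmetric] ennreal_neg mult_nonneg_nonpos)
  qed
  also have "\<dots> = ennreal e * (\<integral>\<^sup>+ z. ennreal (exp (- \<rho> * h) * U (y + \<mu> * h + \<sigma> * z)) \<partial>centered_normal (sqrt h))"
    by (rule nn_integral_cmult) measurable
  also have "\<dots> \<le> ennreal e * (ennreal (U y) + ?neg)"
    by (intro mult_left_mono U_step_nn_integral_le[OF h]) simp
  also have "\<dots> \<le> ennreal (e * U y) + ?neg"
  proof -
    have "ennreal e * ?neg \<le> 1 * ?neg"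
      using e by (intro mult_right_mono) auto
    then show ?thesis
      using e U_ge_id[of y] y by (simp add: distrib_left ennreal_mult' add_left_mono)
  qed
  finally show ?thesis .
qed

lemma killed_value_step_inner_le:
  assumes h: "h > 0"
  shows "(\<integral>\<^sup>+ z. ennreal (if alive h x (Suc k) (d(k := z))
              then exp (- \<rho> * h * Suc k) * U (walk h x (Suc k) (d(k := z))) else 0) \<partial>centered_normal (sqrt h))
    \<le> (\<integral>\<^sup>+ z. ennreal (if alive h x k (d(k := z)) then exp (- \<rho> * h * k) * U (walk h x k (d(k := z))) else 0)
          + ennreal (if alive h x k (d(k := z)) then - U (walk h x (Suc k) (d(k := z))) else 0)
        \<partial>centered_normal (sqrt h))"
proof (cases "alive h x k d")
  case True
  define y where "y = walk h x k d"
  define e where "e = exp (- \<rho> * h * k)"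
  have y: "y > 0" using walk_pos_if_alive[OF True] by (simp add: y_def)
  have e: "0 \<le> e" "e \<le> 1" unfolding e_def using rho_pos h by auto
  have step: "walk h x (Suc k) (d(k := z)) = y + \<mu> * h + \<sigma> * z" for z
    unfolding walk_Suc y_def by (simp add: walk_fun_upd)
  have discount: "exp (- \<rho> * h * Suc k) * u = e * (exp (- \<rho> * h) * u)" for u
    unfolding e_def by (simp add: exp_add[symmetric] algebra_simps)
  have "(\<integral>\<^sup>+ z. ennreal (if alive h x (Suc k) (d(k := z))
        then exp (- \<rho> * h * Suc k) * U (walk h x (Suc k) (d(k := z))) else 0) \<partial>centered_normal (sqrt h))
      = (\<integral>\<^sup>+ z. ennreal (if 0 < y + \<mu> * h + \<sigma> * z then e * (exp (- \<rho> * h) * U (y + \<mu> * h + \<sigma> * z)) else 0)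
        \<partial>centered_normal (sqrt h))"
    unfolding alive_Suc alive_fun_upd step discount using True by simp
  also have "\<dots> \<le> ennreal (e * U y) + (\<integral>\<^sup>+ z. ennreal (- U (y + \<mu> * h + \<sigma> * z)) \<partial>centered_normal (sqrt h))"
    by (rule alive_step_nn_integral_le[OF h y e])
  also have "\<dots> = (\<integral>\<^sup>+ z. ennreal (e * U y) + ennreal (- U (y + \<mu> * h + \<sigma> * z)) \<partial>centered_normal (sqrt h))"
    using prob_space.emeasure_space_1[OF prob_space_centered_normal[of "sqrt h"]] h
    by (subst nn_integral_add) auto
  finally show ?thesis
    using True by (simp add: alive_fun_upd walk_fun_upd step y_def e_def)
qed (simp add: alive_Suc alive_fun_upd)

lemma killed_value_Suc_le:
  assumes h: "h > 0"
  shows "killed_value h x (Suc k) \<le> killed_value h x k + kill_error h x k"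
proof -
  interpret product_prob_space "\<lambda>_::nat. centered_normal (sqrt h)"
    by (intro product_prob_spaceI prob_space_centered_normal) (simp add: h)
  have split: "gauss_steps h (Suc k) = PiM (insert k {..<k}) (\<lambda>_. centered_normal (sqrt h))"
    "gauss_steps h k = PiM {..<k} (\<lambda>_. centered_normal (sqrt h))"
    unfolding gauss_steps_def by (simp_all add: lessThan_Suc)
  define V where "V d = ennreal (if alive h x k d then exp (- \<rho> * h * k) * U (walk h x k d) else 0)" for d
  define E where "E d = ennreal (if alive h x k d then - U (walk h x (Suc k) d) else 0)" for d
  have [measurable]: "V \<in> borel_measurable (gauss_steps h (Suc k))" "E \<in> borel_measurable (gauss_steps h (Suc k))"
    unfolding V_def E_def by measurable auto
  have "killed_value h x (Suc k)
      = (\<integral>\<^sup>+ d. \<integral>\<^sup>+ z. ennreal (if alive h x (Suc k) (d(k := z))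
          then exp (- \<rho> * h * Suc k) * U (walk h x (Suc k) (d(k := z))) else 0) \<partial>centered_normal (sqrt h) \<partial>gauss_steps h k)"
    unfolding killed_value_def split by (rule product_nn_integral_insert) (auto simp flip: split)
  also have "\<dots> \<le> (\<integral>\<^sup>+ d. \<integral>\<^sup>+ z. V (d(k := z)) + E (d(k := z)) \<partial>centered_normal (sqrt h) \<partial>gauss_steps h k)"
    unfolding V_def E_def by (intro nn_integral_mono killed_value_step_inner_le[OF h])
  also have "\<dots> = (\<integral>\<^sup>+ d. V d + E d \<partial>gauss_steps h (Suc k))"
    unfolding split by (rule product_nn_integral_insert[symmetric]) (auto simp flip: split)
  also have "\<dots> = (\<integral>\<^sup>+ d. V d \<partial>gauss_steps h (Suc k)) + kill_error h x k"
    unfolding kill_error_def E_def[symmetric] by (rule nn_integral_add) auto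
  also have "(\<integral>\<^sup>+ d. V d \<partial>gauss_steps h (Suc k)) = (\<integral>\<^sup>+ d. \<integral>\<^sup>+ z. V (d(k := z)) \<partial>centered_normal (sqrt h) \<partial>gauss_steps h k)"
    unfolding split by (rule product_nn_integral_insert) (auto simp flip: split)
  also have "\<dots> = killed_value h x k"
    using prob_space.emeasure_space_1[OF prob_space_centered_normal[of "sqrt h"]] h
    unfolding killed_value_def V_def by (intro nn_integral_cong) (simp add: alive_fun_upd walk_fun_upd)
  finally show ?thesis .
qed

lemma killed_value_le:
  assumes h: "h > 0" and x: "x > 0"
  shows "killed_value h x n \<le> ennreal (U x) + (\<Sum>k<n. kill_error h x k)"
proof (induction n)
  case 0
  then show ?case using killed_value_0[OF h x] by simp
next
  case (Suc n)
  have "killed_value h x (Suc n) \<le> killed_value h x n + kill_error h x n"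
    by (rule killed_value_Suc_le[OF h])
  also have "\<dots> \<le> ennreal (U x) + (\<Sum>k<n. kill_error h x k) + kill_error h x n"
    using Suc.IH by (rule add_right_mono)
  finally show ?case by (simp add: add.assoc)
qed

definition big_jump_bound :: "real \<Rightarrow> real \<Rightarrow> real" where
  "big_jump_bound a w = (if a < \<bar>w\<bar> then \<kappa> * exp (R2 * \<bar>w\<bar>) else 0)"

lemma big_jump_bound_nonneg: "0 \<le> big_jump_bound a w"
  unfolding big_jump_bound_def using kappa_pos by auto

lemma killed_at_most_once:
  assumes "alive h x k d" "walk h x (Suc k) d \<le> 0" "alive h x l d" "walk h x (Suc l) d \<le> 0"
  shows "k = l"
proof (rule ccontr)
  assume "k \<noteq> l"
  then have "Suc k \<le> l \<or> Suc l \<le> k" by auto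
  then show False
    using assms walk_pos_if_alive[of h x l d "Suc k"] walk_pos_if_alive[of h x k d "Suc l"] by auto
qed

text \<open>Killed from level \<open>y > 0\<close> by the step \<open>w\<close>, the walk lands at \<open>- u\<close> with \<open>0 \<le> u \<le> \<bar>w\<bar>\<close>.\<close>
lemma kill_loss_le:
  assumes alive: "alive h x k d" and killed: "walk h x (Suc k) d \<le> 0" and a: "0 \<le> a"
  shows "- U (walk h x (Suc k) d) \<le> loss a + big_jump_bound a (\<mu> * h + \<sigma> * d k)"
proof -
  define w where "w = \<mu> * h + \<sigma> * d k"
  have "0 < walk h x k d" using walk_pos_if_alive[OF alive] by simp
  then have "- walk h x (Suc k) d \<le> \<bar>w\<bar>" unfolding walk_Suc w_def by linarith
  then have "- U (walk h x (Suc k) d) \<le> loss \<bar>w\<bar>"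
    using killed by (simp add: U_neg_eq_loss loss_mono)
  also have "\<dots> \<le> loss a + big_jump_bound a w"
  proof (cases "a < \<bar>w\<bar>")
    case True
    then show ?thesis
      using loss_le[of "\<bar>w\<bar>"] loss_mono[OF a] loss_0 unfolding big_jump_bound_def by simp
  next
    case False
    then show ?thesis
      using loss_mono[of "\<bar>w\<bar>" a] big_jump_bound_nonneg[of a w] by simp
  qed
  finally show ?thesis unfolding w_def .
qed

lemma sum_kill_terms_le:
  assumes a: "0 \<le> a"
  shows "(\<Sum>k<n. ennreal (if alive h x k d then - U (walk h x (Suc k) d) else 0))
     \<le> ennreal (loss a) + (\<Sum>k<n. ennreal (big_jump_bound a (\<mu> * h + \<sigma> * d k)))"
proof -
  define killed where "killed k \<longleftrightarrow> alive h x k d \<and> walk h x (Suc k) d \<le> 0" for k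
  have zero: "ennreal (if alive h x k d then - U (walk h x (Suc k) d) else 0) = 0" if "\<not> killed k" for k
  proof (cases "alive h x k d")
    case True
    then have "0 < walk h x (Suc k) d" using that by (simp add: killed_def)
    then have "0 < U (walk h x (Suc k) d)" using U_ge_id[of "walk h x (Suc k) d"] by simp
    then show ?thesis using True by (simp add: ennreal_neg)
  qed simp
  show ?thesis
  proof (cases "\<exists>k<n. killed k")
    case False
    then have "(\<Sum>k<n. ennreal (if alive h x k d then - U (walk h x (Suc k) d) else 0)) = 0"
      using zero by (intro sum.neutral) simp
    then show ?thesis by simp
  next
    case True
    then obtain k0 where k0: "k0 < n" "killed k0" by blast
    have "(\<Sum>k\<in>{..<n} - {k0}. ennreal (if alive h x k d then - U (walk h x (Suc k) d) else 0)) = 0"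
    proof (intro sum.neutral ballI)
      fix k assume "k \<in> {..<n} - {k0}"
      then have "\<not> killed k"
        using k0(2) killed_at_most_once[of h x k d k0] by (auto simp: killed_def)
      then show "ennreal (if alive h x k d then - U (walk h x (Suc k) d) else 0) = 0"
        by (rule zero)
    qed
    then have "(\<Sum>k<n. ennreal (if alive h x k d then - U (walk h x (Suc k) d) else 0))
        = ennreal (- U (walk h x (Suc k0) d))"
      using k0 by (simp add: sum.remove[of "{..<n}" k0] killed_def)
    also have "\<dots> \<le> ennreal (loss a + big_jump_bound a (\<mu> * h + \<sigma> * d k0))"
      using k0(2) kill_loss_le[OF _ _ a] unfolding killed_def by (intro ennreal_leI) blast
    also have "\<dots> = ennreal (loss a) + ennreal (big_jump_bound a (\<mu> * h + \<sigma> * d k0))"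
      using loss_mono[OF a] loss_0 big_jump_bound_nonneg[of a] by simp
    also have "\<dots> \<le> ennreal (loss a) + (\<Sum>k<n. ennreal (big_jump_bound a (\<mu> * h + \<sigma> * d k)))"
      using k0 by (intro add_left_mono member_le_sum) auto
    finally show ?thesis .
  qed
qed

lemma measurable_gauss_steps_component:
  assumes "k < n" and "f \<in> borel_measurable borel"
  shows "(\<lambda>d. f (d k)) \<in> borel_measurable (gauss_steps h n)"
  unfolding gauss_steps_def
  by (rule measurable_compose[OF measurable_component_singleton])
     (use assms in \<open>auto simp: measurable_cong_sets[OF sets_centered_normal refl]\<close>)

lemma nn_integral_gauss_steps_component:
  assumes h: "h > 0" and k: "k < n" and f: "f \<in> borel_measurable borel"
  shows "(\<integral>\<^sup>+ d. f (d k) \<partial>gauss_steps h n) = (\<integral>\<^sup>+ z. f z \<partial>centered_normal (sqrt h))"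
proof -
  interpret product_prob_space "\<lambda>_::nat. centered_normal (sqrt h)"
    by (intro product_prob_spaceI prob_space_centered_normal) (simp add: h)
  have "(\<integral>\<^sup>+ d. f (d k) \<partial>gauss_steps h n) = (\<integral>\<^sup>+ d. f (restrict d {k} k) \<partial>gauss_steps h n)"
    by simp
  also have "\<dots> = (\<integral>\<^sup>+ d. f (d k) \<partial>PiM {k} (\<lambda>_. centered_normal (sqrt h)))"
    unfolding gauss_steps_def using k f by (intro nn_integral_restrict_PiM) auto
  also have "\<dots> = (\<integral>\<^sup>+ z. f z \<partial>centered_normal (sqrt h))"
    using f by (intro product_nn_integral_singleton) auto
  finally show ?thesis .
qed

lemma kill_error_eq:
  assumes h: "h > 0" and k: "k < n"
  shows "kill_error h x k
    = (\<integral>\<^sup>+ d. ennreal (if alive h x k d then - U (walk h x (Suc k) d) else 0) \<partial>gauss_steps h n)"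
proof -
  interpret product_prob_space "\<lambda>_::nat. centered_normal (sqrt h)"
    by (intro product_prob_spaceI prob_space_centered_normal) (simp add: h)
  have [measurable]: "(\<lambda>d. ennreal (if alive h x k d then - U (walk h x (Suc k) d) else 0))
      \<in> borel_measurable (gauss_steps h (Suc k))"
    by measurable auto
  have "(\<integral>\<^sup>+ d. ennreal (if alive h x k d then - U (walk h x (Suc k) d) else 0) \<partial>gauss_steps h n)
      = (\<integral>\<^sup>+ d. ennreal (if alive h x k (restrict d {..<Suc k})
            then - U (walk h x (Suc k) (restrict d {..<Suc k})) else 0) \<partial>gauss_steps h n)"
    by (simp only: alive_restrict[OF le_SucI[OF order_refl]] walk_restrict[OF order_refl])
  also have "\<dots> = kill_error h x k"
    unfolding kill_error_def using k
    by (subst (1 2) gauss_steps_def, intro nn_integral_restrict_PiM) (auto simp flip: gauss_steps_def)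
  finally show ?thesis ..
qed

lemma kill_error_sum_le:
  assumes h: "h > 0" and a: "0 \<le> a"
  shows "(\<Sum>k<n. kill_error h x k)
    \<le> ennreal (loss a) + of_nat n * (\<integral>\<^sup>+ z. ennreal (big_jump_bound a (\<mu> * h + \<sigma> * z)) \<partial>centered_normal (sqrt h))"
proof -
  have jump_borel [measurable]: "(\<lambda>z. ennreal (big_jump_bound a (\<mu> * h + \<sigma> * z))) \<in> borel_measurable borel"
    unfolding big_jump_bound_def by measurable
  have jump_meas: "(\<lambda>d. ennreal (big_jump_bound a (\<mu> * h + \<sigma> * d k))) \<in> borel_measurable (gauss_steps h n)"
    if "k \<in> {..<n}" for k
    using that by (intro measurable_gauss_steps_component) auto
  have "(\<Sum>k<n. kill_error h x k)
      = (\<Sum>k<n. \<integral>\<^sup>+ d. ennreal (if alive h x k d then - U (walk h x (Suc k) d) else 0) \<partial>gauss_steps h n)"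
    by (simp add: kill_error_eq[OF h])
  also have "\<dots> = (\<integral>\<^sup>+ d. (\<Sum>k<n. ennreal (if alive h x k d then - U (walk h x (Suc k) d) else 0)) \<partial>gauss_steps h n)"
  proof (rule nn_integral_sum[symmetric])
    fix k assume "k \<in> {..<n}"
    then have "k \<le> n" "Suc k \<le> n" by auto
    note [measurable] = measurable_alive[OF this(1)] measurable_walk[OF this(2)]
    show "(\<lambda>d. ennreal (if alive h x k d then - U (walk h x (Suc k) d) else 0)) \<in> borel_measurable (gauss_steps h n)"
      by measurable
  qed
  also have "\<dots> \<le> (\<integral>\<^sup>+ d. ennreal (loss a) + (\<Sum>k<n. ennreal (big_jump_bound a (\<mu> * h + \<sigma> * d k))) \<partial>gauss_steps h n)"
    by (intro nn_integral_mono sum_kill_terms_le[OF a])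
  also have "\<dots> = ennreal (loss a) + (\<integral>\<^sup>+ d. (\<Sum>k<n. ennreal (big_jump_bound a (\<mu> * h + \<sigma> * d k))) \<partial>gauss_steps h n)"
    using prob_space.emeasure_space_1[OF prob_space_gauss_steps[OF h, of n]]
    by (subst nn_integral_add) (auto intro!: borel_measurable_sum jump_meas)
  also have "\<dots> = ennreal (loss a) + (\<Sum>k<n. \<integral>\<^sup>+ d. ennreal (big_jump_bound a (\<mu> * h + \<sigma> * d k)) \<partial>gauss_steps h n)"
    by (subst nn_integral_sum) (auto intro: jump_meas)
  also have "\<dots> = ennreal (loss a) + of_nat n * (\<integral>\<^sup>+ z. ennreal (big_jump_bound a (\<mu> * h + \<sigma> * z)) \<partial>centered_normal (sqrt h))"
    by (simp add: nn_integral_gauss_steps_component[OF h _ jump_borel])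
  finally show ?thesis .
qed

text \<open>A Chebyshev-type bound: on \<open>\<bar>w\<bar> > a\<close> we have \<open>1 \<le> (\<bar>w\<bar> / a)\<^sup>4\<close>, and
  \<open>\<bar>w\<bar> ^ 4 \<le> 256 h\<^sup>2 exp (\<bar>w\<bar> / sqrt h)\<close>.\<close>
lemma big_jump_bound_le_exp:
  assumes h: "0 < h" and a: "0 < a"
  shows "big_jump_bound a w
    \<le> \<kappa> * 256 * h\<^sup>2 / a ^ 4 * (exp ((R2 + 1 / sqrt h) * w) + exp (- (R2 + 1 / sqrt h) * w))"
proof -
  define c where "c = R2 + 1 / sqrt h"
  define u where "u = \<bar>w\<bar>"
  have K: "0 \<le> \<kappa> * 256 * h\<^sup>2 / a ^ 4" using kappa_pos by simp
  show ?thesis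
  proof (cases "a < u")
    case False
    have "0 \<le> \<kappa> * 256 * h\<^sup>2 / a ^ 4 * (exp (c * w) + exp (- c * w))"
      using K by (intro mult_nonneg_nonneg add_nonneg_nonneg) auto
    then show ?thesis
      using False unfolding big_jump_bound_def u_def c_def by simp
  next
    case True
    have sh: "sqrt h > 0" using h by simp
    have "u ^ 4 = (sqrt h) ^ 4 * (u / sqrt h) ^ 4" using sh by (simp add: power_divide)
    also have "(sqrt h) ^ 4 = ((sqrt h)\<^sup>2)\<^sup>2"
      by (simp flip: power_mult)
    also have "\<dots> = h\<^sup>2"
      using h by simp
    also have "(u / sqrt h) ^ 4 \<le> 256 * exp (u / sqrt h)"
      using sh by (intro power4_le_exp) (simp add: u_def)
    finally have u4: "u ^ 4 \<le> h\<^sup>2 * (256 * exp (u / sqrt h))"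
      using h by (simp add: mult_left_mono)
    have "1 \<le> (u / a) ^ 4" using True a by (simp add: one_le_power)
    then have "\<kappa> * exp (R2 * u) \<le> \<kappa> * exp (R2 * u) * u ^ 4 / a ^ 4"
      using kappa_pos mult_left_mono[of 1 "(u / a) ^ 4" "\<kappa> * exp (R2 * u)"] by (simp add: power_divide)
    also have "\<dots> \<le> \<kappa> * exp (R2 * u) * (h\<^sup>2 * (256 * exp (u / sqrt h))) / a ^ 4"
      using u4 kappa_pos a by (intro divide_right_mono mult_left_mono) auto
    also have "\<dots> = \<kappa> * 256 * h\<^sup>2 / a ^ 4 * exp (c * u)"
      unfolding c_def by (simp add: exp_add[symmetric] algebra_simps)
    also have "\<dots> \<le> \<kappa> * 256 * h\<^sup>2 / a ^ 4 * (exp (c * w) + exp (- c * w))"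
      using K unfolding u_def by (intro mult_left_mono) (cases "w \<ge> 0", auto)
    finally show ?thesis using True unfolding big_jump_bound_def u_def c_def by simp
  qed
qed

definition jump_const :: real where
  "jump_const = 512 * \<kappa> * exp (R2 * \<mu> + \<mu> + \<sigma>\<^sup>2 * (R2 + 1)\<^sup>2 / 2)"

lemma jump_const_pos: "jump_const > 0"
  unfolding jump_const_def using kappa_pos by simp

lemma exp_moment_step_le:
  assumes h: "0 < h" "h \<le> 1" and c: "c = R2 + 1 / sqrt h \<or> c = - (R2 + 1 / sqrt h)"
  shows "exp (c * (\<mu> * h) + c\<^sup>2 * \<sigma>\<^sup>2 * (sqrt h)\<^sup>2 / 2) \<le> exp (R2 * \<mu> + \<mu> + \<sigma>\<^sup>2 * (R2 + 1)\<^sup>2 / 2)"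
proof -
  have sh: "0 < sqrt h" "sqrt h \<le> 1" using h by auto
  have "\<bar>c\<bar> = \<bar>R2 + 1 / sqrt h\<bar>"
    using c by auto
  then have abs_c: "\<bar>c\<bar> = R2 + 1 / sqrt h"
    using sh r2_pos by simp
  have "\<bar>c\<bar> * h = R2 * h + sqrt h"
    unfolding abs_c using h by (simp add: algebra_simps) (metis real_div_sqrt less_imp_le)
  also have "\<dots> \<le> R2 + 1"
    using h sh r2_pos by (intro add_mono) (auto simp: mult_left_le)
  finally have ch: "\<bar>c\<bar> * h \<le> R2 + 1" .
  have "c * (\<mu> * h) \<le> \<bar>c\<bar> * (\<mu> * h)"
    using mu_pos h by (intro mult_right_mono) auto
  also have "\<dots> \<le> (R2 + 1) * \<mu>"
    using mult_right_mono[OF ch, of \<mu>] mu_pos by (simp add: algebra_simps)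
  finally have first: "c * (\<mu> * h) \<le> (R2 + 1) * \<mu>" .
  have "\<bar>c\<bar> * sqrt h = R2 * sqrt h + 1"
    unfolding abs_c using sh by (simp add: algebra_simps)
  also have "\<dots> \<le> R2 + 1"
    using sh r2_pos by (simp add: mult_left_le)
  finally have "(\<bar>c\<bar> * sqrt h)\<^sup>2 \<le> (R2 + 1)\<^sup>2"
    using sh by (intro power_mono) auto
  then have "c\<^sup>2 * (sqrt h)\<^sup>2 \<le> (R2 + 1)\<^sup>2"
    by (simp add: power_mult_distrib)
  then have "\<sigma>\<^sup>2 * (c\<^sup>2 * (sqrt h)\<^sup>2) \<le> \<sigma>\<^sup>2 * (R2 + 1)\<^sup>2"
    by (rule mult_left_mono) simp
  then have "c\<^sup>2 * \<sigma>\<^sup>2 * (sqrt h)\<^sup>2 / 2 \<le> \<sigma>\<^sup>2 * (R2 + 1)\<^sup>2 / 2"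
    by (simp add: algebra_simps)
  with first show ?thesis
    by (simp add: algebra_simps)
qed

lemma nn_integral_big_jump_bound_le:
  assumes h: "0 < h" "h \<le> 1" and a: "0 < a"
  shows "(\<integral>\<^sup>+ z. ennreal (big_jump_bound a (\<mu> * h + \<sigma> * z)) \<partial>centered_normal (sqrt h))
    \<le> ennreal (jump_const * h\<^sup>2 / a ^ 4)"
proof -
  define c where "c = R2 + 1 / sqrt h"
  define K where "K = \<kappa> * 256 * h\<^sup>2 / a ^ 4"
  define B where "B = exp (R2 * \<mu> + \<mu> + \<sigma>\<^sup>2 * (R2 + 1)\<^sup>2 / 2)"
  have K: "0 \<le> K" unfolding K_def using kappa_pos by simp
  define Ip where "Ip = exp (c * (\<mu> * h) + c\<^sup>2 * \<sigma>\<^sup>2 * (sqrt h)\<^sup>2 / 2)"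
  define Im where "Im = exp ((- c) * (\<mu> * h) + (- c)\<^sup>2 * \<sigma>\<^sup>2 * (sqrt h)\<^sup>2 / 2)"
  have integral: "has_bochner_integral (centered_normal (sqrt h))
      (\<lambda>z. K * (exp (c * (\<mu> * h + \<sigma> * z)) + exp ((- c) * (\<mu> * h + \<sigma> * z)))) (K * (Ip + Im))"
    unfolding Ip_def Im_def using h
    by (intro has_bochner_integral_mult_right has_bochner_integral_add
          has_bochner_integral_centered_normal_exp_affine) auto
  have "(\<integral>\<^sup>+ z. ennreal (big_jump_bound a (\<mu> * h + \<sigma> * z)) \<partial>centered_normal (sqrt h))
      \<le> (\<integral>\<^sup>+ z. ennreal (K * (exp (c * (\<mu> * h + \<sigma> * z)) + exp ((- c) * (\<mu> * h + \<sigma> * z)))) \<partial>centered_normal (sqrt h))"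
    using big_jump_bound_le_exp[OF h(1) a] unfolding K_def c_def by (intro nn_integral_mono ennreal_leI) simp
  also have "\<dots> = ennreal (K * (Ip + Im))"
    using nn_integral_eq_integral[OF integrable.intros[OF integral]] has_bochner_integral_integral_eq[OF integral] K
    by (cases "K = 0") auto
  also have "K * (Ip + Im) \<le> K * (B + B)"
    unfolding Ip_def Im_def B_def c_def
    using exp_moment_step_le[OF h, of "R2 + 1 / sqrt h"] exp_moment_step_le[OF h, of "- (R2 + 1 / sqrt h)"] K
    by (intro mult_left_mono add_mono) auto
  also have "K * (B + B) = jump_const * h\<^sup>2 / a ^ 4"
    unfolding K_def B_def jump_const_def by (simp add: algebra_simps)
  finally show ?thesis by (simp add: ennreal_leI)
qed

lemma killed_value_le_bound:
  assumes h: "0 < h" "h \<le> 1" and a: "0 < a" and x: "0 < x"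
  shows "killed_value h x n \<le> ennreal (U x + loss a + real n * (jump_const * h\<^sup>2 / a ^ 4))"
proof -
  have nonneg: "0 \<le> loss a" "0 \<le> U x" "0 \<le> real n * (jump_const * h\<^sup>2 / a ^ 4)"
    using loss_mono[of 0 a] loss_0 a U_ge_id[of x] x jump_const_pos by auto
  have "(\<Sum>k<n. kill_error h x k)
      \<le> ennreal (loss a) + of_nat n * (\<integral>\<^sup>+ z. ennreal (big_jump_bound a (\<mu> * h + \<sigma> * z)) \<partial>centered_normal (sqrt h))"
    using a by (intro kill_error_sum_le h) simp
  also have "\<dots> \<le> ennreal (loss a) + of_nat n * ennreal (jump_const * h\<^sup>2 / a ^ 4)"
    by (intro add_left_mono mult_left_mono nn_integral_big_jump_bound_le h a) simp
  finally have "killed_value h x n \<le> ennreal (U x) + (ennreal (loss a) + of_nat n * ennreal (jump_const * h\<^sup>2 / a ^ 4))"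
    using killed_value_le[OF h(1) x] by (meson add_left_mono order_trans)
  also have "\<dots> = ennreal (U x + loss a + real n * (jump_const * h\<^sup>2 / a ^ 4))"
    using nonneg jump_const_pos
    by (simp add: ennreal_of_nat_eq_real_of_nat ennreal_mult'[symmetric] ennreal_plus[symmetric] add.assoc
        del: ennreal_plus)
  finally show ?thesis .
qed

text \<open>With \<open>h = \<Delta> / n\<close> the accumulated error \<open>n h\<^sup>2 / a\<^sup>4 = \<Delta>\<^sup>2 / (n a\<^sup>4)\<close> vanishes as
  \<open>n \<rightarrow> \<infinity>\<close>, while \<open>loss a\<close> is small for small \<open>a\<close>.\<close>
lemma killed_value_le_eps:
  assumes x: "0 < x" and e: "0 < e" and \<Delta>: "0 < \<Delta>"
  obtains n where "n > 0" "killed_value (\<Delta> / real n) x n \<le> ennreal (U x + e)"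
proof -
  obtain a where a: "0 < a" "loss a < e / 2"
    using loss_small[of "e / 2"] e by auto
  obtain n :: nat where n: "real n > max 1 (max \<Delta> (2 * jump_const * \<Delta>\<^sup>2 / (a ^ 4 * e)))"
    using reals_Archimedean2 by blast
  then have n0: "n > 0" by simp
  define h where "h = \<Delta> / real n"
  have h: "0 < h" "h \<le> 1"
    unfolding h_def using \<Delta> n n0 by (auto simp: divide_le_eq)
  have "real n * (jump_const * h\<^sup>2 / a ^ 4) = jump_const * \<Delta>\<^sup>2 / (a ^ 4 * real n)"
    unfolding h_def using n0 by (simp add: power2_eq_square field_simps)
  also have "\<dots> < e / 2"
  proof -
    have "2 * jump_const * \<Delta>\<^sup>2 < real n * (a ^ 4 * e)"
      using n a e by (simp add: divide_less_eq)
    then show ?thesis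
      using n0 a e by (simp add: divide_less_eq field_simps)
  qed
  finally have "U x + loss a + real n * (jump_const * h\<^sup>2 / a ^ 4) \<le> U x + e"
    using a by linarith
  then have "killed_value h x n \<le> ennreal (U x + e)"
    using killed_value_le_bound[OF h a(1) x] order_trans ennreal_leI by blast
  then show ?thesis
    using n0 that unfolding h_def by blast
qed

section \<open>Comparison with the diffusion\<close>

lemma walk_grid_increments:
  assumes W0: "W 0 \<omega> = 0" and j: "j \<le> n"
  shows "walk h x j (\<lambda>i\<in>{..<n}. W (real (Suc i) * h) \<omega> - W (real i * h) \<omega>) = Xproc \<mu> \<sigma> W x (real j * h) \<omega>"
proof -
  have "walk h x j (\<lambda>i\<in>{..<n}. W (real (Suc i) * h) \<omega> - W (real i * h) \<omega>)
      = x + (\<Sum>i<j. \<mu> * h + \<sigma> * (W (real (Suc i) * h) \<omega> - W (real i * h) \<omega>))"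
    unfolding walk_def using j by (intro arg_cong[where f = "\<lambda>s. x + s"] sum.cong) auto
  also have "\<dots> = x + real j * (\<mu> * h) + \<sigma> * (\<Sum>i<j. W (real (Suc i) * h) \<omega> - W (real i * h) \<omega>)"
    by (simp add: sum.distrib sum_distrib_left)
  also have "(\<Sum>i<j. W (real (Suc i) * h) \<omega> - W (real i * h) \<omega>) = W (real j * h) \<omega>"
    using sum_lessThan_telescope[where f = "\<lambda>i. W (real i * h) \<omega>"] W0 by simp
  also have "x + real j * (\<mu> * h) + \<sigma> * W (real j * h) \<omega> = Xproc \<mu> \<sigma> W x (real j * h) \<omega>"
    by (simp add: Xproc_def algebra_simps)
  finally show ?thesis .
qed

text \<open>Since \<open>U y - y\<close> increases to \<open>\<mu> / \<rho> - U0 \<le> K\<close>, an intervention never pays more than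
  the current level.\<close>
lemma Sup_intervention_le:
  assumes K: "K \<ge> \<mu> / \<rho> - U0" and y: "y \<ge> 0"
  shows "Sup {U (y + s) - s - K | s. y + s \<ge> 0} \<le> y"
proof (rule cSup_least)
  show "{U (y + s) - s - K | s. y + s \<ge> 0} \<noteq> {}"
    using y by (auto intro!: exI[of _ 0])
  show "v \<le> y" if v: "v \<in> {U (y + s) - s - K | s. y + s \<ge> 0}" for v
  proof -
    obtain s where "v = U (y + s) - s - K"
      using v by blast
    then show ?thesis
      using U_minus_id_le[of "y + s"] K by simp
  qed
qed

lemma Mop_integrand_le_killed_walk:
  fixes P :: "'a measure" and W :: "real \<Rightarrow> 'a \<Rightarrow> real"
  assumes BM: "std_BM P W" and \<omega>: "\<omega> \<in> space P" and \<Delta>: "\<Delta> > 0" and n: "n > 0"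
    and K: "K \<ge> \<mu> / \<rho> - U0" and x: "x > 0"
  defines "h \<equiv> \<Delta> / real n"
  defines "d \<equiv> \<lambda>i\<in>{..<n}. W (real (Suc i) * h) \<omega> - W (real i * h) \<omega>"
  shows "exp (- \<rho> * \<Delta>) *
            Sup {U (Xproc \<mu> \<sigma> W x \<Delta> \<omega> + s) - s - K | s. Xproc \<mu> \<sigma> W x \<Delta> \<omega> + s \<ge> 0} *
            indicator {\<omega>\<in>space P. hit0 \<mu> \<sigma> W x \<omega> > ereal \<Delta>} \<omega>
    \<le> (if alive h x n d then exp (- \<rho> * h * real n) * U (walk h x n d) else 0)"
proof (cases "hit0 \<mu> \<sigma> W x \<omega> > ereal \<Delta>")
  case True
  have W0: "W 0 \<omega> = 0" and cont: "continuous_on {0..} (\<lambda>t. W t \<omega>)"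
    using BM \<omega> unfolding std_BM_def by auto
  have hn: "real n * h = \<Delta>" and h: "h > 0"
    unfolding h_def using \<Delta> n by auto
  have walk_X: "walk h x j d = Xproc \<mu> \<sigma> W x (real j * h) \<omega>" if "j \<le> n" for j
    unfolding d_def using W0 that by (rule walk_grid_increments)
  have alive: "alive h x n d"
    unfolding alive_def
  proof
    fix j assume "j \<in> {..n}"
    then have "real j * h \<le> \<Delta>"
      using h hn by (metis atMost_iff mult_right_mono of_nat_le_iff less_imp_le)
    then show "0 < walk h x j d"
      using \<open>j \<in> {..n}\<close> h by (simp add: walk_X Xproc_pos_before_hit0[OF W0 cont x True])
  qed
  have X\<Delta>: "Xproc \<mu> \<sigma> W x \<Delta> \<omega> > 0"
    using Xproc_pos_before_hit0[OF W0 cont x True] \<Delta> by simp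
  have "exp (- \<rho> * \<Delta>) * Sup {U (Xproc \<mu> \<sigma> W x \<Delta> \<omega> + s) - s - K | s. Xproc \<mu> \<sigma> W x \<Delta> \<omega> + s \<ge> 0}
      \<le> exp (- \<rho> * \<Delta>) * U (Xproc \<mu> \<sigma> W x \<Delta> \<omega>)"
    using Sup_intervention_le[OF K] U_ge_id X\<Delta> by (intro mult_left_mono) (auto intro: order_trans[of _ "Xproc \<mu> \<sigma> W x \<Delta> \<omega>"])
  also have "\<dots> = exp (- \<rho> * h * real n) * U (walk h x n d)"
    using walk_X[of n] hn by (simp add: mult.assoc mult.commute)
  finally show ?thesis
    using True \<omega> alive by simp
next
  case False
  have "0 \<le> exp (- \<rho> * h * real n) * U (walk h x n d)" if "alive h x n d"
    using U_ge_id[of "walk h x n d"] walk_pos_if_alive[OF that, of n] by simp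
  then show ?thesis
    using False by auto
qed

lemma Mop_U_le:
  fixes P :: "'a measure" and W :: "real \<Rightarrow> 'a \<Rightarrow> real"
  assumes BM: "std_BM P W" and \<Delta>: "\<Delta> > 0" and K: "K \<ge> \<mu> / \<rho> - U0" and x: "x > 0"
  shows "Mop P W \<mu> \<sigma> \<rho> \<Delta> K U x \<le> U x"
proof -
  define I where "I \<omega> = exp (- \<rho> * \<Delta>) *
      Sup {U (Xproc \<mu> \<sigma> W x \<Delta> \<omega> + s) - s - K | s. Xproc \<mu> \<sigma> W x \<Delta> \<omega> + s \<ge> 0} *
      indicator {\<omega>\<in>space P. hit0 \<mu> \<sigma> W x \<omega> > ereal \<Delta>} \<omega>" for \<omega>
  have Ux: "0 \<le> U x" using U_ge_id[of x] x by simp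
  have "(\<integral>\<^sup>+ \<omega>. ennreal (I \<omega>) \<partial>P) \<le> ennreal (U x)"
  proof (rule ennreal_le_epsilon)
    fix e :: real assume e: "0 < e"
    obtain n where n: "n > 0" "killed_value (\<Delta> / real n) x n \<le> ennreal (U x + e)"
      using killed_value_le_eps[OF x e \<Delta>] by blast
    define h where "h = \<Delta> / real n"
    have h: "h > 0" using \<Delta> n by (simp add: h_def)
    define J where "J d = ennreal (if alive h x n d then exp (- \<rho> * h * real n) * U (walk h x n d) else 0)" for d
    have [measurable]: "J \<in> borel_measurable (PiM {..<n} (\<lambda>_. centered_normal (sqrt h)))"
      unfolding J_def gauss_steps_def[symmetric] by measurable
    have "(\<integral>\<^sup>+ \<omega>. ennreal (I \<omega>) \<partial>P) \<le> (\<integral>\<^sup>+ \<omega>. J (\<lambda>i\<in>{..<n}. W (real (Suc i) * h) \<omega> - W (real i * h) \<omega>) \<partial>P)"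
      unfolding I_def J_def h_def
      by (intro nn_integral_mono ennreal_leI Mop_integrand_le_killed_walk[OF BM _ \<Delta> n(1) K x])
    also have "\<dots> = (\<integral>\<^sup>+ d. J d \<partial>PiM {..<n} (\<lambda>_. centered_normal (sqrt h)))"
      by (rule nn_integral_std_BM_grid_increments[OF BM h n(1)]) measurable
    also have "\<dots> = killed_value h x n"
      unfolding killed_value_def gauss_steps_def J_def ..
    also have "\<dots> \<le> ennreal (U x) + ennreal e"
      using n(2) e Ux unfolding h_def by (simp add: ennreal_plus)
    finally show "(\<integral>\<^sup>+ \<omega>. ennreal (I \<omega>) \<partial>P) \<le> ennreal (U x) + ennreal e" .
  qed
  then show ?thesis
    unfolding Mop_def I_def[symmetric] using Ux by (intro integral_real_bounded)
qed

lemma C2_on_with_U: "C2_on_with {0..} U U' U''"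
  unfolding C2_on_with_def
  using U_deriv U'_deriv continuous_on_U'' by (auto intro: has_field_derivative_at_within)

end

theorem proposition2p1:
  fixes P :: "'a measure" and W :: "real \<Rightarrow> 'a \<Rightarrow> real"
    and \<mu> \<sigma> \<rho> \<Delta> K :: real
    and V0 V0' V0'' :: "real \<Rightarrow> real"
  assumes BM: "std_BM P W"
    and pos: "\<mu> > 0" "\<sigma> > 0" "\<rho> > 0" "\<Delta> > 0"
    and K: "K \<ge> 0" "K \<ge> \<mu> / \<rho> - u0 \<mu> \<sigma> \<rho>"
    and V0_d1: "\<And>x. (V0 has_real_derivative V0' x) (at x)"
    and V0_d2: "\<And>x. (V0' has_real_derivative V0'' x) (at x)"
    and V0_ode: "\<And>x. 1/2 * \<sigma>\<^sup>2 * V0'' x + \<mu> * V0' x - \<rho> * V0 x = 0"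
    and V0_init: "V0 (u0 \<mu> \<sigma> \<rho>) = \<mu> / \<rho>" "V0' (u0 \<mu> \<sigma> \<rho>) = 1"
  defines "V \<equiv> (\<lambda>x. if x \<le> u0 \<mu> \<sigma> \<rho> then V0 x else x - u0 \<mu> \<sigma> \<rho> + \<mu> / \<rho>)"
  shows "\<exists>V' V''. C2_on_with {0..} V V' V'' \<and>
           V 0 = 0 \<and>
           (\<forall>x>0.
              V x \<ge> Mop P W \<mu> \<sigma> \<rho> \<Delta> K V x \<and>
              1/2 * \<sigma>\<^sup>2 * V'' x + \<mu> * V' x - \<rho> * V x \<le> 0 \<and>
              V' x \<ge> 1 \<and>
              (V x - Mop P W \<mu> \<sigma> \<rho> \<Delta> K V x) *
                (1/2 * \<sigma>\<^sup>2 * V'' x + \<mu> * V' x - \<rho> * V x) * (V' x - 1) = 0)"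
proof -
  interpret drift_diffusion \<mu> \<sigma> \<rho>
    using pos by unfold_locales auto
  have "V0 = F"
    by (rule ode_solution_eq_F[OF V0_d1 V0_d2 V0_ode V0_init])
  then have V: "V = U"
    unfolding V_def U_def[abs_def] L_def by (rule arg_cong)
  show ?thesis
    unfolding V
    using C2_on_with_U U_0 Mop_U_le[OF BM pos(4) K(2)] generator_U_nonpos U'_ge_1
      generator_U_times_U'_minus_1
    by (intro exI[of _ U'] exI[of _ U'']) (simp add: mult.assoc)
qed

end
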